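(* Let $(M,g)$ be an $n$-dimensional Lorentzian spacetime with $n>4$, and let $\boldsymbol{\ell}$ be the tangent vector of a geodetic null congruence which is not a WAND (in particular, any geodetic null congruence in an algebraically general spacetime). If $\sigma_{ij}=0$ for all $i,j$, then $A_{ij}\neq 0$ for some $i,j$; i.e. a shearfree geodetic null congruence is necessarily twisting unless it is a WAND.
   Context: Complete $\boldsymbol{\ell}$ to a null frame $\{\boldsymbol{n},\boldsymbol{\ell},\boldsymbol{m}^{(2)},\dots,\boldsymbol{m}^{(n-1)}\}$ with $\ell^a\ell_a=n^an_a=\ell^a m^{(i)}_a=n^a m^{(i)}_a=0$, $\ell^a n_a=1$, $m^{(i)a}m^{(j)}_a=\delta_{ij}$; indices $i,j,k$ range over $2,\dots,n-1$. Set $L_{i0}=\ell_{a;b}m^{(i)a}\ell^b$, $L_{ij}=\ell_{a;b}m^{(i)a}m^{(j)b}$, and $C_{0i0j}=C_{abcd}\ell^a m^{(i)b}\ell^c m^{(j)d}$ for the Weyl tensor $C$. $\boldsymbol{\ell}$ is geodetic iff $L_{i0}=0$ for all $i$. Decompose $L_{ij}=\sigma_{ij}+\theta\delta_{ij}+A_{ij}$ with shear $\sigma_{ij}=L_{(ij)}-\frac{1}{n-2}L_{kk}\delta_{ij}$, expansion $\theta=\frac{1}{n-2}L_{kk}$, twist $A_{ij}=L_{[ij]}$. A null vector $\boldsymbol{\ell}$ is a WAND (Weyl aligned null direction) if $C_{0i0j}=0$ for all $i,j$; a spacetime is algebraically general (type G) if it admits no WAND. *)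

theory Defs
  imports "HOL-Analysis.Analysis"
begin

text \<open>Local coordinate model of an n-dimensional spacetime: an open set U of real^'n
 (n = CARD('n)) with metric components g x $ a $ b.  Indices a,b,c,... range over 'n;
 the spacelike frame indices i,j,k range over {2..<n} (nat).\<close>

definition frame_idx :: "'n::finite itself \<Rightarrow> nat set" where
  "frame_idx _ = {2..<CARD('n)}"

definition pd :: "'n::finite \<Rightarrow> (real^'n \<Rightarrow> real) \<Rightarrow> real^'n \<Rightarrow> real" where
  "pd b f x = frechet_derivative f (at x) (axis b 1)"

definition smooth_on :: "(real^'n::finite) set \<Rightarrow> (real^'n \<Rightarrow> real) \<Rightarrow> bool" where
  "smooth_on U f \<longleftrightarrow> (\<forall>ds. \<forall>x\<in>U. (foldr pd ds f) differentiable (at x))"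

definition lorentzian_form :: "real^'n^'n::finite \<Rightarrow> bool" where
  "lorentzian_form G \<longleftrightarrow> (\<forall>a b. G $ a $ b = G $ b $ a) \<and>
     (\<exists>(P::real^'n^'n) t. invertible P \<and>
        transpose P ** G ** P = (\<chi> a b. if a = b then (if a = t then -1 else 1) else 0))"

definition lorentzian_metric :: "(real^'n::finite) set \<Rightarrow> (real^'n \<Rightarrow> real^'n^'n) \<Rightarrow> bool" where
  "lorentzian_metric U g \<longleftrightarrow> (\<forall>x\<in>U. lorentzian_form (g x)) \<and>
     (\<forall>a b. smooth_on U (\<lambda>x. g x $ a $ b))"

definition smooth_vf :: "(real^'n::finite) set \<Rightarrow> (real^'n \<Rightarrow> real^'n) \<Rightarrow> bool" where
  "smooth_vf U v \<longleftrightarrow> (\<forall>a. smooth_on U (\<lambda>x. v x $ a))"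

definition gform :: "real^'n^'n::finite \<Rightarrow> real^'n \<Rightarrow> real^'n \<Rightarrow> real" where
  "gform G u v = (\<Sum>a\<in>UNIV. \<Sum>b\<in>UNIV. G $ a $ b * u $ a * v $ b)"

definition ginv :: "(real^'n::finite \<Rightarrow> real^'n^'n) \<Rightarrow> real^'n \<Rightarrow> real^'n^'n" where
  "ginv g x = matrix_inv (g x)"

definition chr :: "(real^'n::finite \<Rightarrow> real^'n^'n) \<Rightarrow> 'n \<Rightarrow> 'n \<Rightarrow> 'n \<Rightarrow> real^'n \<Rightarrow> real" where
  "chr g c a b x = (1/2) * (\<Sum>d\<in>UNIV. ginv g x $ c $ d *
      (pd a (\<lambda>y. g y $ d $ b) x + pd b (\<lambda>y. g y $ d $ a) x - pd d (\<lambda>y. g y $ a $ b) x))"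

text \<open>Riemann tensor R^a_{bcd}, with [nabla_c, nabla_d] V^a = R^a_{bcd} V^b.\<close>
definition riem_up :: "(real^'n::finite \<Rightarrow> real^'n^'n) \<Rightarrow> 'n \<Rightarrow> 'n \<Rightarrow> 'n \<Rightarrow> 'n \<Rightarrow> real^'n \<Rightarrow> real" where
  "riem_up g a b c d x = pd c (chr g a d b) x - pd d (chr g a c b) x +
     (\<Sum>e\<in>UNIV. chr g a c e x * chr g e d b x - chr g a d e x * chr g e c b x)"

definition riem :: "(real^'n::finite \<Rightarrow> real^'n^'n) \<Rightarrow> 'n \<Rightarrow> 'n \<Rightarrow> 'n \<Rightarrow> 'n \<Rightarrow> real^'n \<Rightarrow> real" where
  "riem g a b c d x = (\<Sum>e\<in>UNIV. g x $ a $ e * riem_up g e b c d x)"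

definition ricci :: "(real^'n::finite \<Rightarrow> real^'n^'n) \<Rightarrow> 'n \<Rightarrow> 'n \<Rightarrow> real^'n \<Rightarrow> real" where
  "ricci g b d x = (\<Sum>a\<in>UNIV. riem_up g a b a d x)"

definition scal :: "(real^'n::finite \<Rightarrow> real^'n^'n) \<Rightarrow> real^'n \<Rightarrow> real" where
  "scal g x = (\<Sum>b\<in>UNIV. \<Sum>d\<in>UNIV. ginv g x $ b $ d * ricci g b d x)"

definition weyl :: "(real^'n::finite \<Rightarrow> real^'n^'n) \<Rightarrow> 'n \<Rightarrow> 'n \<Rightarrow> 'n \<Rightarrow> 'n \<Rightarrow> real^'n \<Rightarrow> real" where
  "weyl g a b c d x = (let N = real CARD('n); G = g x in
     riem g a b c d x
     - (1 / (N - 2)) * (G$a$c * ricci g d b x - G$a$d * ricci g c b x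
                        - G$b$c * ricci g d a x + G$b$d * ricci g c a x)
     + scal g x / ((N - 1) * (N - 2)) * (G$a$c * G$d$b - G$a$d * G$c$b))"

definition lower :: "(real^'n::finite \<Rightarrow> real^'n^'n) \<Rightarrow> (real^'n \<Rightarrow> real^'n) \<Rightarrow> 'n \<Rightarrow> real^'n \<Rightarrow> real" where
  "lower g v a x = (\<Sum>b\<in>UNIV. g x $ a $ b * v x $ b)"

definition cov_low :: "(real^'n::finite \<Rightarrow> real^'n^'n) \<Rightarrow> (real^'n \<Rightarrow> real^'n) \<Rightarrow> 'n \<Rightarrow> 'n \<Rightarrow> real^'n \<Rightarrow> real" where
  "cov_low g v a b x = pd b (lower g v a) x - (\<Sum>c\<in>UNIV. chr g c a b x * lower g v c x)"

definition geodetic :: "(real^'n::finite \<Rightarrow> real^'n^'n) \<Rightarrow> (real^'n) set \<Rightarrow> (real^'n \<Rightarrow> real^'n) \<Rightarrow> bool" where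
  "geodetic g U l \<longleftrightarrow> (\<forall>x\<in>U. \<exists>f::real. \<forall>a.
      (\<Sum>b\<in>UNIV. l x $ b * cov_low g l a b x) = f * lower g l a x)"

definition null_frame :: "real^'n^'n::finite \<Rightarrow> real^'n \<Rightarrow> real^'n \<Rightarrow> (nat \<Rightarrow> real^'n) \<Rightarrow> bool" where
  "null_frame G lv nv m \<longleftrightarrow>
     gform G lv lv = 0 \<and> gform G nv nv = 0 \<and> gform G lv nv = 1 \<and>
     (\<forall>i\<in>frame_idx TYPE('n). gform G lv (m i) = 0 \<and> gform G nv (m i) = 0) \<and>
     (\<forall>i\<in>frame_idx TYPE('n). \<forall>j\<in>frame_idx TYPE('n).
        gform G (m i) (m j) = (if i = j then 1 else 0))"

definition Lij :: "(real^'n::finite \<Rightarrow> real^'n^'n) \<Rightarrow> (real^'n \<Rightarrow> real^'n) \<Rightarrow> (nat \<Rightarrow> real^'n) \<Rightarrow> real^'n \<Rightarrow> nat \<Rightarrow> nat \<Rightarrow> real" where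
  "Lij g l m x i j = (\<Sum>a\<in>UNIV. \<Sum>b\<in>UNIV. cov_low g l a b x * m i $ a * m j $ b)"

definition expansion :: "(real^'n::finite \<Rightarrow> real^'n^'n) \<Rightarrow> (real^'n \<Rightarrow> real^'n) \<Rightarrow> (nat \<Rightarrow> real^'n) \<Rightarrow> real^'n \<Rightarrow> real" where
  "expansion g l m x = (1 / (real CARD('n) - 2)) * (\<Sum>k\<in>frame_idx TYPE('n). Lij g l m x k k)"

definition shear :: "(real^'n::finite \<Rightarrow> real^'n^'n) \<Rightarrow> (real^'n \<Rightarrow> real^'n) \<Rightarrow> (nat \<Rightarrow> real^'n) \<Rightarrow> real^'n \<Rightarrow> nat \<Rightarrow> nat \<Rightarrow> real" where
  "shear g l m x i j = (Lij g l m x i j + Lij g l m x j i) / 2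
      - (if i = j then expansion g l m x else 0)"

definition twist :: "(real^'n::finite \<Rightarrow> real^'n^'n) \<Rightarrow> (real^'n \<Rightarrow> real^'n) \<Rightarrow> (nat \<Rightarrow> real^'n) \<Rightarrow> real^'n \<Rightarrow> nat \<Rightarrow> nat \<Rightarrow> real" where
  "twist g l m x i j = (Lij g l m x i j - Lij g l m x j i) / 2"

definition C0i0j :: "(real^'n::finite \<Rightarrow> real^'n^'n) \<Rightarrow> (real^'n \<Rightarrow> real^'n) \<Rightarrow> (nat \<Rightarrow> real^'n) \<Rightarrow> real^'n \<Rightarrow> nat \<Rightarrow> nat \<Rightarrow> real" where
  "C0i0j g l m x i j = (\<Sum>a\<in>UNIV. \<Sum>b\<in>UNIV. \<Sum>c\<in>UNIV. \<Sum>d\<in>UNIV.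
      weyl g a b c d x * l x $ a * m i $ b * l x $ c * m j $ d)"

definition wand :: "(real^'n::finite \<Rightarrow> real^'n^'n) \<Rightarrow> (real^'n) set \<Rightarrow> (real^'n \<Rightarrow> real^'n) \<Rightarrow> (real^'n \<Rightarrow> nat \<Rightarrow> real^'n) \<Rightarrow> bool" where
  "wand g U l mf \<longleftrightarrow> (\<forall>x\<in>U. \<forall>i\<in>frame_idx TYPE('n). \<forall>j\<in>frame_idx TYPE('n). C0i0j g l (mf x) x i j = 0)"

end

theory Submission
  imports Defs
begin

text \<open>Suppose the congruence is geodetic, shearfree and twistfree, so that \<open>L\<^sub>i\<^sub>j = \<theta> \<delta>\<^sub>i\<^sub>j\<close>.
  Together with \<open>l\<^sup>a L\<^sub>a\<^sub>b = 0\<close> (\<open>l\<close> is null) and \<open>l\<^sup>b L\<^sub>a\<^sub>b = \<epsilon> l\<^sub>a\<close> (\<open>l\<close> is geodetic) this forces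
  \<open>L\<^sub>a\<^sub>b = \<theta> g\<^sub>a\<^sub>b + l\<^sub>a X\<^sub>b + Y\<^sub>a l\<^sub>b\<close> near every point. Substituting this into the Ricci identity
  \<open>l\<^sub>b\<^sub>;\<^sub>d\<^sub>c - l\<^sub>b\<^sub>;\<^sub>c\<^sub>d = - l\<^sub>f R\<^sup>f\<^sub>b\<^sub>c\<^sub>d\<close> and contracting with \<open>l\<close> and the spacelike frame gives
  \<open>R\<^sub>0\<^sub>i\<^sub>0\<^sub>j = \<rho> \<delta>\<^sub>i\<^sub>j\<close> for the single scalar \<open>\<rho> = \<epsilon>\<theta> - \<theta>\<^sup>2 - l\<^sup>c \<theta>\<^sub>,\<^sub>c\<close>. Hence \<open>R\<^sub>0\<^sub>0 = (n - 2) \<rho>\<close>, and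
  \<open>C\<^sub>0\<^sub>i\<^sub>0\<^sub>j = R\<^sub>0\<^sub>i\<^sub>0\<^sub>j - \<delta>\<^sub>i\<^sub>j R\<^sub>0\<^sub>0 / (n - 2)\<close> vanishes: \<open>l\<close> is a WAND. This argument needs only \<open>n > 2\<close>.\<close>

section \<open>Coordinate partial derivatives\<close>

lemmas differentiable_has_frechet_derivative = frechet_derivative_works[THEN iffD1]

lemma pd_has_derivative: "(f has_derivative f') (at x) \<Longrightarrow> pd b f x = f' (axis b 1)"
  unfolding pd_def using frechet_derivative_at by metis

lemma pd_const [simp]: "pd b (\<lambda>y. k) x = 0"
  by (rule pd_has_derivative[of _ "\<lambda>_. 0", simplified]) simp

lemma pd_add:
  "f differentiable (at x) \<Longrightarrow> h differentiable (at x) \<Longrightarrow>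
   pd b (\<lambda>y. f y + h y) x = pd b f x + pd b h x"
  by (subst pd_has_derivative[OF has_derivative_add[OF
        differentiable_has_frechet_derivative differentiable_has_frechet_derivative]]) (auto simp: pd_def)

lemma pd_diff:
  "f differentiable (at x) \<Longrightarrow> h differentiable (at x) \<Longrightarrow>
   pd b (\<lambda>y. f y - h y) x = pd b f x - pd b h x"
  by (subst pd_has_derivative[OF has_derivative_diff[OF
        differentiable_has_frechet_derivative differentiable_has_frechet_derivative]]) (auto simp: pd_def)

lemma pd_mult:
  fixes f h :: "real^'n::finite \<Rightarrow> real"
  shows "f differentiable (at x) \<Longrightarrow> h differentiable (at x) \<Longrightarrow>
   pd b (\<lambda>y. f y * h y) x = pd b f x * h x + f x * pd b h x"
  by (subst pd_has_derivative[OF has_derivative_mult[OF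
        differentiable_has_frechet_derivative differentiable_has_frechet_derivative]]) (auto simp: pd_def)

lemma pd_divide_const:
  fixes f :: "real^'n::finite \<Rightarrow> real"
  shows "f differentiable (at x) \<Longrightarrow> pd b (\<lambda>y. f y / k) x = pd b f x / k"
  using pd_mult[of f x "\<lambda>_. 1/k" b] by simp

lemma pd_sum:
  fixes f :: "'i \<Rightarrow> real^'n::finite \<Rightarrow> real"
  shows "(\<And>i. i \<in> I \<Longrightarrow> f i differentiable (at x)) \<Longrightarrow>
   pd b (\<lambda>y. \<Sum>i\<in>I. f i y) x = (\<Sum>i\<in>I. pd b (f i) x)"
  by (subst pd_has_derivative[OF has_derivative_sum[OF differentiable_has_frechet_derivative]])
    (auto simp: pd_def)

lemma pd_transform_within_open:
  assumes "open V" "x \<in> V" "\<And>y. y \<in> V \<Longrightarrow> f y = h y"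
  shows "pd b f x = pd b h x"
proof -
  have "(f has_derivative D) (at x) \<longleftrightarrow> (h has_derivative D) (at x)" for D
    using has_derivative_transform_within_open[OF _ assms(1,2), of f _ UNIV h]
          has_derivative_transform_within_open[OF _ assms(1,2), of h _ UNIV f] assms(3)
    by metis
  then show ?thesis unfolding pd_def frechet_derivative_def by simp
qed

lemma differentiable_transform_within_open:
  assumes "open V" "x \<in> V" "\<And>y. y \<in> V \<Longrightarrow> f y = h y" "f differentiable (at x)"
  shows "h differentiable (at x)"
  using assms has_derivative_transform_within_open[OF _ assms(1,2), of f _ UNIV h]
  unfolding differentiable_def by metis

lemma has_real_derivative_along_line:
  fixes F :: "real^'n::finite \<Rightarrow> real"
  assumes "F differentiable (at (p + s *\<^sub>R w))"
  shows "((\<lambda>t. F (p + t *\<^sub>R w)) has_real_derivative frechet_derivative F (at (p + s *\<^sub>R w)) w) (at s)"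
proof -
  let ?F' = "frechet_derivative F (at (p + s *\<^sub>R w))"
  have line: "((\<lambda>t. p + t *\<^sub>R w) has_derivative (\<lambda>t. t *\<^sub>R w)) (at s)"
    by (auto intro!: derivative_eq_intros)
  have "((\<lambda>t. F (p + t *\<^sub>R w)) has_derivative (\<lambda>t. ?F' (t *\<^sub>R w))) (at s)"
    using has_derivative_compose[OF line differentiable_has_frechet_derivative[OF assms]] .
  moreover have "(\<lambda>t. ?F' (t *\<^sub>R w)) = (\<lambda>t. ?F' w * t)"
    using linear_scale[OF linear_frechet_derivative[OF assms]] by (auto simp: mult.commute)
  ultimately show ?thesis unfolding has_field_derivative_def by simp
qed

lemma norm_axis_combination_le:
  fixes s t :: real
  assumes "0 \<le> s" "0 \<le> t"
  shows "norm (s *\<^sub>R axis a (1::real) + t *\<^sub>R axis e 1) \<le> s + t"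
  using norm_triangle_ineq[of "s *\<^sub>R axis a (1::real)" "t *\<^sub>R axis e 1"] assms by simp

text \<open>Two applications of the mean value theorem to the second difference
  \<open>\<phi> h - \<phi> 0\<close>, where \<open>\<phi> s = f (x + h e + s a) - f (x + s a)\<close>.\<close>

lemma second_difference_mean_value:
  fixes f :: "real^'n::finite \<Rightarrow> real"
  assumes h: "0 < h"
    and rect: "\<And>s t. 0 \<le> s \<Longrightarrow> s \<le> h \<Longrightarrow> 0 \<le> t \<Longrightarrow> t \<le> h \<Longrightarrow>
                 x + s *\<^sub>R axis a 1 + t *\<^sub>R axis e 1 \<in> U"
    and df: "\<And>y. y \<in> U \<Longrightarrow> f differentiable (at y)"
    and dfa: "\<And>y. y \<in> U \<Longrightarrow> pd a f differentiable (at y)"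
  shows "\<exists>s t. 0 < s \<and> s < h \<and> 0 < t \<and> t < h \<and>
    f (x + h *\<^sub>R axis a 1 + h *\<^sub>R axis e 1) - f (x + h *\<^sub>R axis a 1) - f (x + h *\<^sub>R axis e 1) + f x
      = h * h * pd e (pd a f) (x + s *\<^sub>R axis a 1 + t *\<^sub>R axis e 1)"
proof -
  let ?a = "axis a (1::real)" and ?e = "axis e (1::real)"
  define \<phi> where "\<phi> s = f ((x + h *\<^sub>R ?e) + s *\<^sub>R ?a) - f (x + s *\<^sub>R ?a)" for s
  have "\<exists>z. 0 < z \<and> z < h \<and> \<phi> h - \<phi> 0 = (h - 0) *
          (pd a f ((x + h *\<^sub>R ?e) + z *\<^sub>R ?a) - pd a f (x + z *\<^sub>R ?a))"
  proof (rule MVT2[OF h])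
    fix s assume s: "0 \<le> s" "s \<le> h"
    have "(x + h *\<^sub>R ?e) + s *\<^sub>R ?a \<in> U" "x + s *\<^sub>R ?a \<in> U"
      using rect[OF s, of h] rect[OF s, of 0] h by (simp_all add: algebra_simps)
    then show "DERIV \<phi> s :> pd a f ((x + h *\<^sub>R ?e) + s *\<^sub>R ?a) - pd a f (x + s *\<^sub>R ?a)"
      unfolding \<phi>_def pd_def by (intro DERIV_diff has_real_derivative_along_line df)
  qed
  then obtain s where s: "0 < s" "s < h" and
    sv: "\<phi> h - \<phi> 0 = h * (pd a f ((x + s *\<^sub>R ?a) + h *\<^sub>R ?e) - pd a f ((x + s *\<^sub>R ?a) + 0 *\<^sub>R ?e))"
    by (auto simp: algebra_simps)
  have "\<exists>z. 0 < z \<and> z < h \<and> pd a f ((x + s *\<^sub>R ?a) + h *\<^sub>R ?e) - pd a f ((x + s *\<^sub>R ?a) + 0 *\<^sub>R ?e)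
      = (h - 0) * pd e (pd a f) ((x + s *\<^sub>R ?a) + z *\<^sub>R ?e)"
  proof (rule MVT2[OF h])
    fix t assume t: "0 \<le> t" "t \<le> h"
    then have "(x + s *\<^sub>R ?a) + t *\<^sub>R ?e \<in> U" using rect[of s t] s by simp
    then show "DERIV (\<lambda>t. pd a f ((x + s *\<^sub>R ?a) + t *\<^sub>R ?e)) t :> pd e (pd a f) ((x + s *\<^sub>R ?a) + t *\<^sub>R ?e)"
      unfolding pd_def[of e] by (intro has_real_derivative_along_line dfa)
  qed
  then obtain t where t: "0 < t" "t < h" and
    tv: "pd a f ((x + s *\<^sub>R ?a) + h *\<^sub>R ?e) - pd a f ((x + s *\<^sub>R ?a) + 0 *\<^sub>R ?e)
      = h * pd e (pd a f) ((x + s *\<^sub>R ?a) + t *\<^sub>R ?e)" by auto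
  have "f (x + h *\<^sub>R ?a + h *\<^sub>R ?e) - f (x + h *\<^sub>R ?a) - f (x + h *\<^sub>R ?e) + f x = \<phi> h - \<phi> 0"
    unfolding \<phi>_def by (simp add: algebra_simps)
  also have "\<dots> = h * h * pd e (pd a f) (x + s *\<^sub>R ?a + t *\<^sub>R ?e)" using sv tv by simp
  finally show ?thesis using s t by blast
qed

text \<open>Schwarz's theorem: the second difference over a small square equals \<open>h\<^sup>2\<close> times either
  mixed partial at some point of the square, and both mixed partials are continuous at \<open>x\<close>.\<close>

lemma pd_commute:
  fixes f :: "real^'n::finite \<Rightarrow> real"
  assumes U: "open U" "x \<in> U"
    and df: "\<And>y. y \<in> U \<Longrightarrow> f differentiable (at y)"
    and dfc: "\<And>y. y \<in> U \<Longrightarrow> pd c f differentiable (at y)"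
    and dfd: "\<And>y. y \<in> U \<Longrightarrow> pd d f differentiable (at y)"
    and cont_dc: "continuous (at x) (pd d (pd c f))"
    and cont_cd: "continuous (at x) (pd c (pd d f))"
  shows "pd d (pd c f) x = pd c (pd d f) x"
proof (rule ccontr)
  let ?u = "axis c (1::real)" and ?v = "axis d (1::real)"
  assume ne: "pd d (pd c f) x \<noteq> pd c (pd d f) x"
  define \<epsilon> where "\<epsilon> = \<bar>pd d (pd c f) x - pd c (pd d f) x\<bar> / 2"
  have "\<epsilon> > 0" using ne by (simp add: \<epsilon>_def)
  obtain \<delta>1 where \<delta>1: "\<delta>1 > 0" "\<And>y. dist y x < \<delta>1 \<Longrightarrow> dist (pd d (pd c f) y) (pd d (pd c f) x) < \<epsilon>"
    using cont_dc \<open>\<epsilon> > 0\<close> unfolding continuous_at_eps_delta by blast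
  obtain \<delta>2 where \<delta>2: "\<delta>2 > 0" "\<And>y. dist y x < \<delta>2 \<Longrightarrow> dist (pd c (pd d f) y) (pd c (pd d f) x) < \<epsilon>"
    using cont_cd \<open>\<epsilon> > 0\<close> unfolding continuous_at_eps_delta by blast
  obtain r where r: "r > 0" "ball x r \<subseteq> U" using U open_contains_ball by blast
  define h where "h = min (r/4) (min (\<delta>1/4) (\<delta>2/4))"
  have h: "0 < h" "2*h < r" "2*h < \<delta>1" "2*h < \<delta>2" using r \<delta>1 \<delta>2 by (auto simp: h_def)
  have near: "dist (x + s *\<^sub>R axis a 1 + t *\<^sub>R axis e 1) x \<le> s + t"
    if "0 \<le> s" "0 \<le> t" for s t a e
    using norm_axis_combination_le[of s t a e] that by (simp add: dist_norm add.assoc)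
  have rect: "x + s *\<^sub>R axis a 1 + t *\<^sub>R axis e 1 \<in> U"
    if "0 \<le> s" "s \<le> h" "0 \<le> t" "t \<le> h" for s t a e
    using near[of s t a e] that r h by (auto simp: subset_iff dist_commute)
  obtain s1 t1 where st1: "0 < s1" "s1 < h" "0 < t1" "t1 < h"
    "f (x + h *\<^sub>R ?u + h *\<^sub>R ?v) - f (x + h *\<^sub>R ?u) - f (x + h *\<^sub>R ?v) + f x
      = h * h * pd d (pd c f) (x + s1 *\<^sub>R ?u + t1 *\<^sub>R ?v)"
    using second_difference_mean_value[OF h(1) rect df dfc] by blast
  obtain s2 t2 where st2: "0 < s2" "s2 < h" "0 < t2" "t2 < h"
    "f (x + h *\<^sub>R ?v + h *\<^sub>R ?u) - f (x + h *\<^sub>R ?v) - f (x + h *\<^sub>R ?u) + f x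
      = h * h * pd c (pd d f) (x + s2 *\<^sub>R ?v + t2 *\<^sub>R ?u)"
    using second_difference_mean_value[OF h(1) rect df dfd] by blast
  have "pd d (pd c f) (x + s1 *\<^sub>R ?u + t1 *\<^sub>R ?v) = pd c (pd d f) (x + s2 *\<^sub>R ?v + t2 *\<^sub>R ?u)"
    using st1(5) st2(5) h(1) by (simp add: algebra_simps)
  moreover have "dist (pd d (pd c f) (x + s1 *\<^sub>R ?u + t1 *\<^sub>R ?v)) (pd d (pd c f) x) < \<epsilon>"
    using \<delta>1(2) near[of s1 t1 c d] st1 h by simp
  moreover have "dist (pd c (pd d f) (x + s2 *\<^sub>R ?v + t2 *\<^sub>R ?u)) (pd c (pd d f) x) < \<epsilon>"
    using \<delta>2(2) near[of s2 t2 d c] st2 h by simp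
  ultimately show False unfolding \<epsilon>_def dist_real_def by (simp add: abs_if split: if_splits)
qed

lemma smooth_on_pd: "smooth_on U f \<Longrightarrow> smooth_on U (pd b f)"
  unfolding smooth_on_def
proof (intro allI ballI)
  fix ds x assume "\<forall>ds. \<forall>x\<in>U. foldr pd ds f differentiable (at x)" "x \<in> U"
  then have "foldr pd (ds @ [b]) f differentiable (at x)" by blast
  then show "foldr pd ds (pd b f) differentiable (at x)" by simp
qed

lemma smooth_on_differentiable: "smooth_on U f \<Longrightarrow> y \<in> U \<Longrightarrow> f differentiable (at y)"
  unfolding smooth_on_def by (metis foldr_Nil id_apply)

lemma smooth_on_pd_commute:
  assumes "smooth_on U f" "open U" "y \<in> U"
  shows "pd c (pd d f) y = pd d (pd c f) y"
  using assms
  by (intro pd_commute differentiable_imp_continuous_within smooth_on_differentiable smooth_on_pd)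

section \<open>Inverse matrices and Lorentzian forms\<close>

lemma matrix_inv_right_left:
  fixes A :: "real^'n::finite^'n"
  assumes "invertible A"
  shows "A ** matrix_inv A = mat 1 \<and> matrix_inv A ** A = mat 1"
proof -
  have "\<exists>A'. A ** A' = mat 1 \<and> A' ** A = mat 1" using assms unfolding invertible_def by blast
  then show ?thesis unfolding matrix_inv_def by (rule someI_ex)
qed

lemma matrix_inv_entries:
  fixes A :: "real^'n::finite^'n"
  assumes "invertible A"
  shows "(\<Sum>k\<in>UNIV. A$i$k * matrix_inv A $k$j) = (if i = j then 1 else 0)"
    and "(\<Sum>k\<in>UNIV. matrix_inv A $i$k * A $k$j) = (if i = j then 1 else 0)"
  using arg_cong[of _ _ "\<lambda>M. M $ i $ j", OF conjunct1[OF matrix_inv_right_left[OF assms]]]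
        arg_cong[of _ _ "\<lambda>M. M $ i $ j", OF conjunct2[OF matrix_inv_right_left[OF assms]]]
  by (simp_all add: matrix_matrix_mult_def mat_def)

lemma lorentzian_form_invertible:
  fixes G :: "real^'n::finite^'n"
  assumes "lorentzian_form G"
  shows "invertible G"
proof -
  obtain P :: "real^'n^'n" and t where P: "invertible P"
    "transpose P ** G ** P = (\<chi> a b. if a = b then (if a = t then -1 else 1) else 0)"
    using assms unfolding lorentzian_form_def by blast
  let ?D = "(\<chi> a b. if a = b then (if a = t then -1 else 1) else 0) :: real^'n^'n"
  have "det ?D = (\<Prod>i\<in>UNIV. ?D$i$i)" by (rule det_diagonal) simp
  also have "\<dots> \<noteq> 0" by (simp add: prod_zero_iff)
  finally have "det (transpose P ** G ** P) \<noteq> 0" using P(2) by simp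
  then have "det (transpose P) * det G * det P \<noteq> 0" by (metis det_mul)
  then show ?thesis by (simp add: invertible_det_nz)
qed

lemma lorentzian_form_sym: "lorentzian_form G \<Longrightarrow> G$a$b = G$b$a"
  unfolding lorentzian_form_def by blast

lemma matrix_inv_cramer:
  fixes A :: "real^'n::finite^'n"
  assumes d: "det A \<noteq> 0"
  shows "matrix_inv A $ k $ j = det (\<chi> r s. if s = k then (if r = j then 1 else 0) else A$r$s) / det A"
proof -
  define x where "x = (\<chi> k. matrix_inv A $ k $ j)"
  have "A *v x = (\<chi> r. if r = j then 1 else 0)"
    using matrix_inv_entries(1)[of A] d
    by (simp add: x_def matrix_vector_mult_def vec_eq_iff invertible_det_nz)
  then have "x $ k = det (\<chi> i j'. if j' = k then (\<chi> r. if r = j then (1::real) else 0)$i else A$i$j') / det A"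
    using cramer[OF d] by simp
  moreover have "(\<chi> i j'. if j' = k then (\<chi> r. if r = j then (1::real) else 0)$i else A$i$j')
      = (\<chi> r s. if s = k then (if r = j then 1 else 0) else A$r$s)"
    by (simp add: vec_eq_iff)
  ultimately show ?thesis by (simp add: x_def)
qed

lemma differentiable_prod:
  fixes f :: "'i \<Rightarrow> real^'n::finite \<Rightarrow> real"
  assumes "\<And>i. i \<in> I \<Longrightarrow> f i differentiable (at x)"
  shows "(\<lambda>y. \<Prod>i\<in>I. f i y) differentiable (at x)"
proof -
  obtain D where "\<forall>i\<in>I. (f i has_derivative D i) (at x)"
    using assms unfolding differentiable_def by metis
  then have "((\<lambda>y. \<Prod>i\<in>I. f i y) has_derivative (\<lambda>y. \<Sum>i\<in>I. D i y * (\<Prod>j\<in>I - {i}. f j x))) (at x)"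
    by (intro has_derivative_prod) auto
  then show ?thesis unfolding differentiable_def by blast
qed

lemma differentiable_det:
  fixes M :: "real^'n::finite \<Rightarrow> real^'m::finite^'m"
  assumes "\<And>i j. (\<lambda>y. M y $ i $ j) differentiable (at x)"
  shows "(\<lambda>y. det (M y)) differentiable (at x)"
  unfolding det_def
proof (rule differentiable_sum)
  show "finite {p. p permutes (UNIV::'m set)}" by (simp add: finite_permutations)
qed (intro ballI differentiable_mult differentiable_const differentiable_prod assms)

lemma differentiable_matrix_inv_entry:
  fixes M :: "real^'n::finite \<Rightarrow> real^'m::finite^'m"
  assumes dM: "\<And>i j. (\<lambda>y. M y $ i $ j) differentiable (at x)"
    and V: "open V" "x \<in> V" and det: "\<And>y. y \<in> V \<Longrightarrow> det (M y) \<noteq> 0"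
  shows "(\<lambda>y. matrix_inv (M y) $ k $ j) differentiable (at x)"
proof (rule differentiable_transform_within_open[OF V])
  show "det (\<chi> r s. if s = k then (if r = j then 1 else 0) else M y$r$s) / det (M y)
      = matrix_inv (M y) $ k $ j" if "y \<in> V" for y
    using matrix_inv_cramer[OF det[OF that]] by simp
  have "(\<lambda>y. (\<chi> r s. if s = k then (if r = j then 1 else 0) else M y$r$s) $ r $ s) differentiable (at x)"
    for r s by (cases "s = k") (auto intro: dM)
  then show "(\<lambda>y. det (\<chi> r s. if s = k then (if r = j then 1 else 0) else M y$r$s) / det (M y))
      differentiable (at x)"
    using det[OF V(2)] by (intro differentiable_divide differentiable_det dM)
qed

section \<open>Bilinear forms and null frames\<close>

lemma sum_kronecker:
  fixes Q :: "'n::finite \<Rightarrow> real"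
  shows "(\<Sum>f\<in>UNIV. (if a = f then 1 else 0) * Q f) = Q a"
    and "(\<Sum>f\<in>UNIV. Q f * (if a = f then 1 else 0)) = Q a"
    and "(\<Sum>f\<in>UNIV. (if f = a then 1 else 0) * Q f) = Q a"
    and "(\<Sum>f\<in>UNIV. Q f * (if f = a then 1 else 0)) = Q a"
  by (simp_all add: if_distrib[of "\<lambda>t. t * _"] if_distrib[of "\<lambda>t. _ * t"] sum.delta sum.delta'
      cong: if_cong)

lemma gform_add_left: "gform G (u + w) v = gform G u v + gform G w v"
  unfolding gform_def by (simp add: algebra_simps sum.distrib)

lemma gform_add_right: "gform G u (v + w) = gform G u v + gform G u w"
  unfolding gform_def by (simp add: algebra_simps sum.distrib)

lemma gform_diff_left: "gform G (u - w) v = gform G u v - gform G w v"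
  unfolding gform_def by (simp add: algebra_simps sum_subtractf)

lemma gform_diff_right: "gform G u (v - w) = gform G u v - gform G u w"
  unfolding gform_def by (simp add: algebra_simps sum_subtractf)

lemma gform_scale_left: "gform G (r *\<^sub>R u) v = r * gform G u v"
  unfolding gform_def by (simp add: sum_distrib_left mult_ac)

lemma gform_scale_right: "gform G u (r *\<^sub>R v) = r * gform G u v"
  unfolding gform_def by (simp add: sum_distrib_left mult_ac)

lemma gform_zero_left [simp]: "gform G 0 v = 0"
  unfolding gform_def by simp

lemma gform_zero_right [simp]: "gform G u 0 = 0"
  unfolding gform_def by simp

lemma gform_sum_left: "gform G (\<Sum>k\<in>K. f k) v = (\<Sum>k\<in>K. gform G (f k) v)"
  by (induction K rule: infinite_finite_induct) (auto simp: gform_add_left)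

lemma gform_sum_right: "gform G u (\<Sum>k\<in>K. f k) = (\<Sum>k\<in>K. gform G u (f k))"
  by (induction K rule: infinite_finite_induct) (auto simp: gform_add_right)

lemma gform_axis: "gform G (axis a 1) (axis b 1) = G$a$b"
  unfolding gform_def axis_def
  by (simp add: if_distrib[of "\<lambda>t. _ * t"] if_distrib[of "\<lambda>t. t * _"] sum.delta sum.delta' cong: if_cong)

lemma gform_sym: "(\<And>a b. G$a$b = G$b$a) \<Longrightarrow> gform G u v = gform G v u"
  unfolding gform_def by (subst sum.swap) (simp add: mult_ac)

text \<open>Every vector is determined by its products with the dual frame \<open>{n, l, m\<^sub>i}\<close>: the coefficient
  map \<open>c \<mapsto> \<Sum>\<^sub>a c\<^sub>a e\<^sub>a\<close> onto the frame is injective, hence surjective.\<close>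

lemma null_frame_expansion:
  fixes G :: "real^'n::finite^'n" and lv nv :: "real^'n" and m :: "nat \<Rightarrow> real^'n"
  assumes sym: "\<And>a b. G$a$b = G$b$a" and N: "CARD('n) \<ge> 2" and fr: "null_frame G lv nv m"
  shows "v = gform G nv v *\<^sub>R lv + gform G lv v *\<^sub>R nv
           + (\<Sum>k\<in>frame_idx TYPE('n). gform G (m k) v *\<^sub>R m k)"
proof -
  let ?N = "CARD('n)"
  define e where "e k = (if k = 0 then lv else if k = 1 then nv else m k)" for k
  define e' where "e' k = (if k = 0 then nv else if k = 1 then lv else m k)" for k
  have FI: "frame_idx TYPE('n) = {2..<?N}" by (simp add: frame_idx_def)
  have gram: "gform G (e' j) (e k) = (if j = k then 1 else 0)" if "j < ?N" "k < ?N" for j k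
    using that fr gform_sym[OF sym, of nv lv] gform_sym[OF sym, of "m j" lv]
      gform_sym[OF sym, of "m j" nv]
    by (cases "j = 0"; cases "j = 1"; cases "k = 0"; cases "k = 1")
      (auto simp: e_def e'_def null_frame_def FI)
  obtain h where h: "bij_betw h {0..<?N} (UNIV::'n set)"
    using ex_bij_betw_nat_finite[of "UNIV::'n set"] by auto
  define hi where "hi = inv_into {0..<?N} h"
  have hi_bij: "bij_betw hi UNIV {0..<?N}" unfolding hi_def using h bij_betw_inv_into by blast
  then have hi: "hi a < ?N" "hi a = hi b \<longleftrightarrow> a = b" for a b
    unfolding bij_betw_def inj_on_def by auto
  define A where "A c = (\<Sum>a\<in>UNIV. (c$a) *\<^sub>R e (hi a))" for c :: "real^'n"
  have linA: "linear A"
    by (rule linearI) (simp_all add: A_def scaleR_add_left sum.distrib scaleR_sum_right)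
  have coef: "gform G (e' (hi b)) (A c) = c $ b" for b c
  proof -
    have "gform G (e' (hi b)) (A c) = (\<Sum>a\<in>UNIV. c$a * (if b = a then 1 else 0))"
      unfolding A_def gform_sum_right gform_scale_right by (rule sum.cong) (auto simp: gram hi)
    then show ?thesis by (simp add: sum_kronecker)
  qed
  have "inj A"
    unfolding linear_injective_0[OF linA] by (metis coef gform_zero_right vec_eq_iff zero_index)
  then obtain c where c: "v = A c"
    using linA linear_injective_imp_surjective by (metis surjD)
  have "v = (\<Sum>a\<in>UNIV. gform G (e' (hi a)) v *\<^sub>R e (hi a))"
    using c coef by (simp add: A_def)
  also have "\<dots> = (\<Sum>k\<in>{0..<?N}. gform G (e' k) v *\<^sub>R e k)"
    using hi_bij by (rule sum.reindex_bij_betw)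
  also have "{0..<?N} = {0,1} \<union> {2..<?N}" using N by auto
  also have "(\<Sum>k\<in>{0,1} \<union> {2..<?N}. gform G (e' k) v *\<^sub>R e k) =
     gform G nv v *\<^sub>R lv + gform G lv v *\<^sub>R nv + (\<Sum>k\<in>{2..<?N}. gform G (m k) v *\<^sub>R m k)"
    by (subst sum.union_disjoint) (auto simp: e_def e'_def)
  finally show ?thesis by (simp add: FI)
qed

lemma matrix_inv_null_frame:
  fixes G Gi :: "real^'n::finite^'n"
  assumes sym: "\<And>a b. G$a$b = G$b$a" and N: "CARD('n) \<ge> 2" and fr: "null_frame G lv nv m"
    and inv: "\<And>i j. (\<Sum>k\<in>UNIV. G$i$k * Gi$k$j) = (if i = j then 1 else 0)"
  shows "Gi$a$b = lv$a * nv$b + nv$a * lv$b + (\<Sum>k\<in>frame_idx TYPE('n). m k$a * m k$b)"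
proof -
  define v where "v = (\<chi> c. Gi$c$b)"
  have gv: "gform G u v = u$b" for u
  proof -
    have "gform G u v = (\<Sum>a\<in>UNIV. u$a * (\<Sum>c\<in>UNIV. G$a$c * Gi$c$b))"
      unfolding gform_def v_def by (simp add: sum_distrib_left mult_ac)
    then show ?thesis using inv by (simp add: sum_kronecker)
  qed
  have "v$a = (gform G nv v *\<^sub>R lv + gform G lv v *\<^sub>R nv
      + (\<Sum>k\<in>frame_idx TYPE('n). gform G (m k) v *\<^sub>R m k))$a"
    using null_frame_expansion[OF sym N fr] by metis
  then have "v$a = lv$a * nv$b + nv$a * lv$b + (\<Sum>k\<in>frame_idx TYPE('n). m k$a * m k$b)"
    by (simp add: gv sum_component mult_ac)
  then show ?thesis by (simp add: v_def)
qed

lemma trace_null_frame: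
  fixes Gi M :: "real^'n::finite^'n"
  assumes "\<And>a b. Gi$a$b = lv$a * nv$b + nv$a * lv$b + (\<Sum>k\<in>K. m k$a * m k$b)"
  shows "(\<Sum>a\<in>UNIV. \<Sum>b\<in>UNIV. Gi$a$b * M$a$b)
           = gform M lv nv + gform M nv lv + (\<Sum>k\<in>K. gform M (m k) (m k))"
proof -
  have "(\<Sum>a\<in>UNIV. \<Sum>b\<in>UNIV. Gi$a$b * M$a$b) = gform M lv nv + gform M nv lv
      + (\<Sum>a\<in>UNIV. \<Sum>b\<in>UNIV. \<Sum>k\<in>K. M$a$b * m k$a * m k$b)"
    unfolding assms gform_def by (simp add: algebra_simps sum_distrib_left sum.distrib)
  also have "(\<Sum>a\<in>UNIV. \<Sum>b\<in>UNIV. \<Sum>k\<in>K. M$a$b * m k$a * m k$b) = (\<Sum>k\<in>K. gform M (m k) (m k))"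
    unfolding gform_def by (simp add: sum.swap[of _ K])
  finally show ?thesis .
qed

lemma Lij_eq_gform: "Lij g l m y i j = gform (\<chi> a b. cov_low g l a b y) (m i) (m j)"
  unfolding Lij_def gform_def by simp

section \<open>Pointwise identities of curvature\<close>

text \<open>The two curvature identities below are proved pointwise, with every derivative replaced by
  an independent array: \<open>dG c a b\<close> and \<open>ddG c d a b\<close> stand for \<open>\<partial>\<^sub>c g\<^sub>a\<^sub>b\<close> and \<open>\<partial>\<^sub>c\<partial>\<^sub>d g\<^sub>a\<^sub>b\<close>,
  \<open>D\<Gamma> c e a b\<close> for \<open>\<partial>\<^sub>c \<Gamma>\<^sup>e\<^sub>a\<^sub>b\<close>, \<open>Dl c e\<close> and \<open>DDl c d b\<close> for \<open>\<partial>\<^sub>c l\<^sub>e\<close> and \<open>\<partial>\<^sub>c\<partial>\<^sub>d l\<^sub>b\<close>.\<close>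

lemma riemann_antisym_algebraic:
  fixes G :: "'n::finite \<Rightarrow> 'n \<Rightarrow> real" and \<Gamma> :: "'n \<Rightarrow> 'n \<Rightarrow> 'n \<Rightarrow> real"
    and D\<Gamma> R :: "'n \<Rightarrow> 'n \<Rightarrow> 'n \<Rightarrow> 'n \<Rightarrow> real" and dG :: "'n \<Rightarrow> 'n \<Rightarrow> 'n \<Rightarrow> real"
    and ddG :: "'n \<Rightarrow> 'n \<Rightarrow> 'n \<Rightarrow> 'n \<Rightarrow> real"
  assumes symG: "\<And>a b. G a b = G b a"
    and symdG: "\<And>c a b. dG c a b = dG c b a"
    and symdd1: "\<And>c d a b. ddG c d a b = ddG d c a b"
    and symdd2: "\<And>c d a b. ddG c d a b = ddG c d b a"
    and \<Gamma>_low: "\<And>a d b. (\<Sum>e\<in>UNIV. G a e * \<Gamma> e d b) = (dG d a b + dG b a d - dG a d b) / 2"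
    and D\<Gamma>_low: "\<And>a c d b. (\<Sum>e\<in>UNIV. G a e * D\<Gamma> c e d b) =
              (ddG c d a b + ddG c b a d - ddG c a d b) / 2 - (\<Sum>e\<in>UNIV. dG c a e * \<Gamma> e d b)"
    and R: "\<And>e b c d. R e b c d = D\<Gamma> c e d b - D\<Gamma> d e c b
              + (\<Sum>h\<in>UNIV. \<Gamma> e c h * \<Gamma> h d b - \<Gamma> e d h * \<Gamma> h c b)"
  shows "(\<Sum>e\<in>UNIV. G a e * R e b c d) = - (\<Sum>e\<in>UNIV. G b e * R e a c d)"
proof -
  define \<Gamma>l where "\<Gamma>l a d b = (\<Sum>e\<in>UNIV. G a e * \<Gamma> e d b)" for a d b
  have dG_\<Gamma>l: "dG c a e = \<Gamma>l a c e + \<Gamma>l e c a" for c a e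
    unfolding \<Gamma>l_def \<Gamma>_low using symdG[of c a e] symdG[of e a c] symdG[of a e c] by (simp add: field_simps)
  define Q where "Q c a d b = (\<Sum>e\<in>UNIV. \<Gamma>l e c a * \<Gamma> e d b)" for c a d b
  have Q_sym: "Q c a d b = Q d b c a" for c a d b
  proof -
    have "Q c a d b = (\<Sum>e\<in>UNIV. \<Sum>f\<in>UNIV. G e f * \<Gamma> f c a * \<Gamma> e d b)"
      by (simp add: Q_def \<Gamma>l_def sum_distrib_right)
    also have "\<dots> = (\<Sum>f\<in>UNIV. \<Sum>e\<in>UNIV. G f e * \<Gamma> e d b * \<Gamma> f c a)"
      by (subst sum.swap) (simp add: symG mult_ac)
    also have "\<dots> = Q d b c a"
      by (simp add: Q_def \<Gamma>l_def sum_distrib_right)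
    finally show ?thesis .
  qed
  have GR: "(\<Sum>e\<in>UNIV. G a e * R e b c d)
     = (ddG c d a b + ddG c b a d - ddG c a d b - ddG d c a b - ddG d b a c + ddG d a c b) / 2
       - Q c a d b + Q d a c b" for a b c d
  proof -
    have quad: "(\<Sum>e\<in>UNIV. G a e * (\<Sum>h\<in>UNIV. \<Gamma> e c h * \<Gamma> h d b - \<Gamma> e d h * \<Gamma> h c b))
        = (\<Sum>h\<in>UNIV. \<Gamma>l a c h * \<Gamma> h d b) - (\<Sum>h\<in>UNIV. \<Gamma>l a d h * \<Gamma> h c b)"
    proof -
      have "(\<Sum>e\<in>UNIV. G a e * (\<Sum>h\<in>UNIV. \<Gamma> e c h * \<Gamma> h d b - \<Gamma> e d h * \<Gamma> h c b))
         = (\<Sum>h\<in>UNIV. \<Sum>e\<in>UNIV. G a e * \<Gamma> e c h * \<Gamma> h d b - G a e * \<Gamma> e d h * \<Gamma> h c b)"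
        by (subst sum.swap) (simp add: sum_distrib_left algebra_simps)
      then show ?thesis by (simp add: \<Gamma>l_def sum_subtractf sum_distrib_right)
    qed
    have lin: "(\<Sum>e\<in>UNIV. dG c a e * \<Gamma> e d b) = (\<Sum>e\<in>UNIV. \<Gamma>l a c e * \<Gamma> e d b) + Q c a d b" for c d
      by (simp add: dG_\<Gamma>l Q_def algebra_simps sum.distrib)
    have "(\<Sum>e\<in>UNIV. G a e * R e b c d)
       = (\<Sum>e\<in>UNIV. G a e * D\<Gamma> c e d b) - (\<Sum>e\<in>UNIV. G a e * D\<Gamma> d e c b)
         + (\<Sum>e\<in>UNIV. G a e * (\<Sum>h\<in>UNIV. \<Gamma> e c h * \<Gamma> h d b - \<Gamma> e d h * \<Gamma> h c b))"
      by (simp add: R algebra_simps sum.distrib sum_subtractf)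
    then show ?thesis unfolding quad D\<Gamma>_low lin by (simp add: field_simps)
  qed
  show ?thesis
    unfolding GR
    using Q_sym[of c a d b] Q_sym[of c b d a]
      symdd1[of c d a b] symdd1[of c d b a] symdd2[of c b a d] symdd2[of c a d b]
      symdd2[of d b a c] symdd2[of d a c b]
    by (simp add: field_simps)
qed

text \<open>Here \<open>L b d\<close> is \<open>l\<^sub>b\<^sub>;\<^sub>d\<close>, \<open>DL c b d\<close> its coordinate derivative \<open>\<partial>\<^sub>c\<close>, and \<open>T b d c\<close> the
  second covariant derivative \<open>l\<^sub>b\<^sub>;\<^sub>d\<^sub>c\<close>.\<close>

lemma ricci_identity_algebraic:
  fixes \<Gamma> :: "'n::finite \<Rightarrow> 'n \<Rightarrow> 'n \<Rightarrow> real" and D\<Gamma> R :: "'n \<Rightarrow> 'n \<Rightarrow> 'n \<Rightarrow> 'n \<Rightarrow> real"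
    and lam :: "'n \<Rightarrow> real" and Dl L :: "'n \<Rightarrow> 'n \<Rightarrow> real" and DDl DL T :: "'n \<Rightarrow> 'n \<Rightarrow> 'n \<Rightarrow> real"
  assumes sym\<Gamma>: "\<And>e a b. \<Gamma> e a b = \<Gamma> e b a" and symD\<Gamma>: "\<And>c e a b. D\<Gamma> c e a b = D\<Gamma> c e b a"
    and symDD: "\<And>c d b. DDl c d b = DDl d c b"
    and L: "\<And>b d. L b d = Dl d b - (\<Sum>e\<in>UNIV. \<Gamma> e b d * lam e)"
    and DL: "\<And>c b d. DL c b d = DDl c d b - (\<Sum>e\<in>UNIV. D\<Gamma> c e b d * lam e + \<Gamma> e b d * Dl c e)"
    and T: "\<And>b d c. T b d c = DL c b d - (\<Sum>e\<in>UNIV. \<Gamma> e c b * L e d) - (\<Sum>e\<in>UNIV. \<Gamma> e c d * L b e)"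
    and R: "\<And>e b c d. R e b c d = D\<Gamma> c e d b - D\<Gamma> d e c b
              + (\<Sum>h\<in>UNIV. \<Gamma> e c h * \<Gamma> h d b - \<Gamma> e d h * \<Gamma> h c b)"
  shows "T b d c - T b c d = - (\<Sum>f\<in>UNIV. lam f * R f b c d)"
proof -
  have swap: "(\<Sum>e\<in>UNIV. \<Gamma> e p b * (\<Sum>f\<in>UNIV. \<Gamma> f e q * lam f))
      = (\<Sum>f\<in>UNIV. lam f * (\<Sum>e\<in>UNIV. \<Gamma> f q e * \<Gamma> e p b))" for p q
  proof -
    have "(\<Sum>e\<in>UNIV. \<Gamma> e p b * (\<Sum>f\<in>UNIV. \<Gamma> f e q * lam f))
        = (\<Sum>f\<in>UNIV. \<Sum>e\<in>UNIV. \<Gamma> e p b * (\<Gamma> f e q * lam f))"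
      by (subst sum.swap) (simp add: sum_distrib_left)
    then show ?thesis by (simp add: sum_distrib_left sym\<Gamma>[of _ _ q] mult_ac)
  qed
  have L_chr_c: "(\<Sum>e\<in>UNIV. \<Gamma> e c b * L e d)
     = (\<Sum>e\<in>UNIV. \<Gamma> e c b * Dl d e) - (\<Sum>f\<in>UNIV. lam f * (\<Sum>e\<in>UNIV. \<Gamma> f d e * \<Gamma> e c b))"
    using swap[of c d] by (simp add: L right_diff_distrib sum_subtractf)
  have L_chr_d: "(\<Sum>e\<in>UNIV. \<Gamma> e d b * L e c)
     = (\<Sum>e\<in>UNIV. \<Gamma> e d b * Dl c e) - (\<Sum>f\<in>UNIV. lam f * (\<Sum>e\<in>UNIV. \<Gamma> f c e * \<Gamma> e d b))"
    using swap[of d c] by (simp add: L right_diff_distrib sum_subtractf)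
  have L_chr_sym: "(\<Sum>e\<in>UNIV. \<Gamma> e c d * L b e) = (\<Sum>e\<in>UNIV. \<Gamma> e d c * L b e)"
    by (simp add: sym\<Gamma>[of _ c d])
  have DL_cd: "DL c b d = DDl c d b - (\<Sum>e\<in>UNIV. lam e * D\<Gamma> c e d b) - (\<Sum>e\<in>UNIV. \<Gamma> e d b * Dl c e)"
    by (simp add: DL sum.distrib symD\<Gamma>[of c _ b d] sym\<Gamma>[of _ b d] mult_ac)
  have DL_dc: "DL d b c = DDl d c b - (\<Sum>e\<in>UNIV. lam e * D\<Gamma> d e c b) - (\<Sum>e\<in>UNIV. \<Gamma> e c b * Dl d e)"
    by (simp add: DL sum.distrib symD\<Gamma>[of d _ b c] sym\<Gamma>[of _ b c] mult_ac)
  have rhs: "(\<Sum>f\<in>UNIV. lam f * R f b c d)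
     = (\<Sum>f\<in>UNIV. lam f * D\<Gamma> c f d b) - (\<Sum>f\<in>UNIV. lam f * D\<Gamma> d f c b)
       + (\<Sum>f\<in>UNIV. lam f * (\<Sum>e\<in>UNIV. \<Gamma> f c e * \<Gamma> e d b))
       - (\<Sum>f\<in>UNIV. lam f * (\<Sum>e\<in>UNIV. \<Gamma> f d e * \<Gamma> e c b))"
    by (simp add: R algebra_simps sum.distrib sum_subtractf)
  show ?thesis
    unfolding rhs T L_chr_c L_chr_d L_chr_sym DL_cd DL_dc using symDD[of c d b] by (simp add: algebra_simps)
qed

section \<open>Curvature of a Lorentzian metric in a chart\<close>

lemma riem_up_antisym: "riem_up g a b c d x = - riem_up g a b d c x"
  unfolding riem_up_def by (simp add: sum_subtractf algebra_simps)

lemma riem_antisym_last: "riem g a b c d x = - riem g a b d c x"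
  unfolding riem_def by (subst riem_up_antisym) (simp add: sum_negf)

locale lorentzian_chart =
  fixes U :: "(real^'n::finite) set" and g :: "real^'n \<Rightarrow> real^'n^'n"
  assumes open_U: "open U" and metric: "lorentzian_metric U g"
begin

abbreviation g_comp :: "'n \<Rightarrow> 'n \<Rightarrow> real^'n \<Rightarrow> real" where "g_comp a b \<equiv> (\<lambda>y. g y $ a $ b)"

lemma g_smooth: "smooth_on U (g_comp a b)"
  using metric unfolding lorentzian_metric_def by blast

lemma g_differentiable: "y \<in> U \<Longrightarrow> g_comp a b differentiable (at y)"
  using smooth_on_differentiable g_smooth by blast

lemma pd_g_differentiable: "y \<in> U \<Longrightarrow> pd c (g_comp a b) differentiable (at y)"
  using smooth_on_differentiable smooth_on_pd g_smooth by blast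

lemma pd2_g_commute: "y \<in> U \<Longrightarrow> pd c (pd d (g_comp a b)) y = pd d (pd c (g_comp a b)) y"
  using smooth_on_pd_commute[OF g_smooth open_U] by blast

lemma g_sym: "y \<in> U \<Longrightarrow> g y $ a $ b = g y $ b $ a"
  using metric lorentzian_form_sym unfolding lorentzian_metric_def by blast

lemma g_invertible: "y \<in> U \<Longrightarrow> invertible (g y)"
  using metric lorentzian_form_invertible unfolding lorentzian_metric_def by blast

lemma gform_g_sym: "y \<in> U \<Longrightarrow> gform (g y) u v = gform (g y) v u"
  by (rule gform_sym) (rule g_sym)

lemma ginv_right: "y \<in> U \<Longrightarrow> (\<Sum>k\<in>UNIV. g y$i$k * ginv g y $k$j) = (if i = j then 1 else 0)"
  using matrix_inv_entries(1)[OF g_invertible] unfolding ginv_def by blast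

lemma ginv_left: "y \<in> U \<Longrightarrow> (\<Sum>k\<in>UNIV. ginv g y $i$k * g y $k$j) = (if i = j then 1 else 0)"
  using matrix_inv_entries(2)[OF g_invertible] unfolding ginv_def by blast

lemma ginv_differentiable: "y \<in> U \<Longrightarrow> (\<lambda>z. ginv g z $ i $ j) differentiable (at y)"
  unfolding ginv_def
  by (rule differentiable_matrix_inv_entry[OF _ open_U])
    (auto intro: g_differentiable simp: invertible_det_nz[symmetric] g_invertible)

lemma pd_g_sym: "y \<in> U \<Longrightarrow> pd c (g_comp a b) y = pd c (g_comp b a) y"
  by (rule pd_transform_within_open[OF open_U]) (auto simp: g_sym)

lemma pd2_g_sym: "y \<in> U \<Longrightarrow> pd c (pd d (g_comp a b)) y = pd c (pd d (g_comp b a)) y"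
  by (rule pd_transform_within_open[OF open_U], assumption, rule pd_g_sym)

lemma chr_differentiable: "y \<in> U \<Longrightarrow> chr g c a b differentiable (at y)"
  unfolding chr_def[abs_def]
  by (auto intro!: differentiable_divide differentiable_mult differentiable_sum differentiable_add differentiable_diff
      ginv_differentiable pd_g_differentiable)

lemma chr_sym: "y \<in> U \<Longrightarrow> chr g c a b y = chr g c b a y"
  unfolding chr_def using pd_g_sym by (simp add: algebra_simps)

lemma pd_chr_sym: "y \<in> U \<Longrightarrow> pd e (chr g c a b) y = pd e (chr g c b a) y"
  by (rule pd_transform_within_open[OF open_U], assumption, rule chr_sym)

lemma chr_lowered:
  assumes y: "y \<in> U"
  shows "(\<Sum>e\<in>UNIV. g y$a$e * chr g e d b y)
           = (pd d (g_comp a b) y + pd b (g_comp a d) y - pd a (g_comp d b) y) / 2"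
proof -
  have "(\<Sum>e\<in>UNIV. g y$a$e * chr g e d b y) = (1/2) * (\<Sum>f\<in>UNIV. \<Sum>e\<in>UNIV. g y$a$e * ginv g y $ e $ f *
      (pd d (g_comp f b) y + pd b (g_comp f d) y - pd f (g_comp d b) y))"
    unfolding chr_def by (subst sum.swap) (simp add: sum_distrib_left mult.assoc)
  also have "\<dots> = (1/2) * (\<Sum>f\<in>UNIV. (if a = f then 1 else 0) *
      (pd d (g_comp f b) y + pd b (g_comp f d) y - pd f (g_comp d b) y))"
    by (simp add: sum_distrib_right[symmetric] ginv_right[OF y])
  finally show ?thesis by (simp add: sum_kronecker)
qed

lemma pd_chr_lowered:
  assumes x: "x \<in> U"
  shows "(\<Sum>e\<in>UNIV. g x$a$e * pd c (chr g e d b) x) =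
     (pd c (pd d (g_comp a b)) x + pd c (pd b (g_comp a d)) x - pd c (pd a (g_comp d b)) x) / 2
     - (\<Sum>e\<in>UNIV. pd c (g_comp a e) x * chr g e d b x)"
proof -
  have "pd c (\<lambda>y. \<Sum>e\<in>UNIV. g y$a$e * chr g e d b y) x =
        pd c (\<lambda>y. (pd d (g_comp a b) y + pd b (g_comp a d) y - pd a (g_comp d b) y) / 2) x"
    by (rule pd_transform_within_open[OF open_U x]) (rule chr_lowered)
  moreover have "pd c (\<lambda>y. \<Sum>e\<in>UNIV. g y$a$e * chr g e d b y) x =
       (\<Sum>e\<in>UNIV. pd c (g_comp a e) x * chr g e d b x + g x$a$e * pd c (chr g e d b) x)"
    by (subst pd_sum) (auto intro!: differentiable_mult g_differentiable chr_differentiable x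
        simp: pd_mult[OF g_differentiable[OF x] chr_differentiable[OF x]])
  moreover have "pd c (\<lambda>y. (pd d (g_comp a b) y + pd b (g_comp a d) y - pd a (g_comp d b) y) / 2) x =
     (pd c (pd d (g_comp a b)) x + pd c (pd b (g_comp a d)) x - pd c (pd a (g_comp d b)) x) / 2"
    by (simp add: pd_divide_const pd_add pd_diff pd_g_differentiable x differentiable_add differentiable_diff)
  ultimately show ?thesis by (simp add: sum.distrib algebra_simps)
qed

lemma pd_g_eq_chr:
  assumes y: "y \<in> U"
  shows "pd c (g_comp b d) y = (\<Sum>e\<in>UNIV. chr g e c b y * g y$e$d) + (\<Sum>e\<in>UNIV. chr g e c d y * g y$b$e)"
proof -
  have chr_b: "(\<Sum>e\<in>UNIV. chr g e c b y * g y$e$d)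
      = (pd c (g_comp d b) y + pd b (g_comp d c) y - pd d (g_comp c b) y) / 2"
    using chr_lowered[OF y, of d c b] by (simp add: g_sym[OF y, of _ d] mult.commute)
  have chr_d: "(\<Sum>e\<in>UNIV. chr g e c d y * g y$b$e)
      = (pd c (g_comp b d) y + pd d (g_comp b c) y - pd b (g_comp c d) y) / 2"
    using chr_lowered[OF y, of b c d] by (simp add: mult.commute)
  show ?thesis unfolding chr_b chr_d
    using pd_g_sym[OF y, of c d b] pd_g_sym[OF y, of b d c] pd_g_sym[OF y, of d b c]
    by (simp add: field_simps)
qed

lemma riem_antisym_first:
  assumes x: "x \<in> U"
  shows "riem g a b c d x = - riem g b a c d x"
  unfolding riem_def
proof (rule riemann_antisym_algebraic[where dG = "\<lambda>c a b. pd c (g_comp a b) x"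
      and ddG = "\<lambda>c d a b. pd c (pd d (g_comp a b)) x"])
  show "\<And>a b. g x$a$b = g x$b$a" using g_sym[OF x] .
  show "\<And>c a b. pd c (g_comp a b) x = pd c (g_comp b a) x" using pd_g_sym[OF x] .
  show "\<And>c d a b. pd c (pd d (g_comp a b)) x = pd d (pd c (g_comp a b)) x" using pd2_g_commute[OF x] .
  show "\<And>c d a b. pd c (pd d (g_comp a b)) x = pd c (pd d (g_comp b a)) x" using pd2_g_sym[OF x] .
qed (use chr_lowered[OF x] pd_chr_lowered[OF x] in \<open>simp_all add: riem_up_def\<close>)

lemma riem_up_eq_ginv_riem:
  assumes x: "x \<in> U"
  shows "riem_up g e b c d x = (\<Sum>f\<in>UNIV. ginv g x $e$f * riem g f b c d x)"
proof -
  have "(\<Sum>f\<in>UNIV. ginv g x $e$f * riem g f b c d x)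
      = (\<Sum>h\<in>UNIV. (\<Sum>f\<in>UNIV. ginv g x $e$f * g x$f$h) * riem_up g h b c d x)"
    unfolding riem_def by (simp add: sum_distrib_left sum_distrib_right mult_ac) (rule sum.swap)
  then show ?thesis using ginv_left[OF x] by (simp add: sum_kronecker)
qed

end

section \<open>Contractions of arrays with vectors\<close>

lemma sum4_swap_23:
  fixes F :: "'n::finite \<Rightarrow> 'n \<Rightarrow> 'n \<Rightarrow> 'n \<Rightarrow> real"
  shows "(\<Sum>a\<in>UNIV. \<Sum>b\<in>UNIV. \<Sum>c\<in>UNIV. \<Sum>d\<in>UNIV. F a b c d)
       = (\<Sum>a\<in>UNIV. \<Sum>c\<in>UNIV. \<Sum>b\<in>UNIV. \<Sum>d\<in>UNIV. F a b c d)"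
  by (rule sum.cong[OF refl]) (rule sum.swap)

lemma sum4_swap_pairs:
  fixes F :: "'n::finite \<Rightarrow> 'n \<Rightarrow> 'n \<Rightarrow> 'n \<Rightarrow> real"
  shows "(\<Sum>a\<in>UNIV. \<Sum>c\<in>UNIV. \<Sum>e\<in>UNIV. \<Sum>f\<in>UNIV. F a c e f)
       = (\<Sum>e\<in>UNIV. \<Sum>f\<in>UNIV. \<Sum>a\<in>UNIV. \<Sum>c\<in>UNIV. F a c e f)"
proof -
  have "(\<Sum>a\<in>UNIV. \<Sum>c\<in>UNIV. \<Sum>e\<in>UNIV. \<Sum>f\<in>UNIV. F a c e f)
      = (\<Sum>e\<in>UNIV. \<Sum>a\<in>UNIV. \<Sum>c\<in>UNIV. \<Sum>f\<in>UNIV. F a c e f)"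
    by (subst sum4_swap_23) (rule sum.swap)
  also have "\<dots> = (\<Sum>e\<in>UNIV. \<Sum>a\<in>UNIV. \<Sum>f\<in>UNIV. \<Sum>c\<in>UNIV. F a c e f)"
    by (rule sum.cong[OF refl], rule sum.cong[OF refl], rule sum.swap)
  also have "\<dots> = (\<Sum>e\<in>UNIV. \<Sum>f\<in>UNIV. \<Sum>a\<in>UNIV. \<Sum>c\<in>UNIV. F a c e f)"
    by (rule sum.cong[OF refl], rule sum.swap)
  finally show ?thesis .
qed

definition contract2 :: "('n::finite \<Rightarrow> 'n \<Rightarrow> real) \<Rightarrow> real^'n \<Rightarrow> real^'n \<Rightarrow> real" where
  "contract2 F u v = (\<Sum>a\<in>UNIV. \<Sum>c\<in>UNIV. F a c * u$a * v$c)"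

definition contract4 ::
    "('n::finite \<Rightarrow> 'n \<Rightarrow> 'n \<Rightarrow> 'n \<Rightarrow> real) \<Rightarrow> real^'n \<Rightarrow> real^'n \<Rightarrow> real^'n \<Rightarrow> real^'n \<Rightarrow> real" where
  "contract4 R p q r s = (\<Sum>a\<in>UNIV. \<Sum>b\<in>UNIV. \<Sum>c\<in>UNIV. \<Sum>d\<in>UNIV. R a b c d * p$a * q$b * r$c * s$d)"

lemma contract2_matrix: "contract2 (\<lambda>a c. G$a$c) u v = gform G u v"
  unfolding contract2_def gform_def by simp

lemma contract4_add:
  "contract4 (\<lambda>a b c d. A a b c d + B a b c d) p q r s = contract4 A p q r s + contract4 B p q r s"
  unfolding contract4_def by (simp add: algebra_simps sum.distrib)

lemma contract4_diff:
  "contract4 (\<lambda>a b c d. A a b c d - B a b c d) p q r s = contract4 A p q r s - contract4 B p q r s"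
  unfolding contract4_def by (simp add: algebra_simps sum_subtractf)

lemma contract4_scale: "contract4 (\<lambda>a b c d. k * A a b c d) p q r s = k * contract4 A p q r s"
  unfolding contract4_def by (simp add: sum_distrib_left mult_ac)

lemma contract4_minus: "contract4 (\<lambda>a b c d. - R a b c d) p q r s = - contract4 R p q r s"
  unfolding contract4_def by (simp add: sum_negf)

lemma contract4_product_13_24:
  "contract4 (\<lambda>a b c d. A a c * B b d) p q r s = contract2 A p r * contract2 B q s"
proof -
  have "contract4 (\<lambda>a b c d. A a c * B b d) p q r s
      = (\<Sum>a\<in>UNIV. \<Sum>c\<in>UNIV. \<Sum>b\<in>UNIV. \<Sum>d\<in>UNIV. (A a c * p$a * r$c) * (B b d * q$b * s$d))"
    unfolding contract4_def by (subst sum4_swap_23) (simp add: mult_ac)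
  also have "\<dots> = contract2 A p r * contract2 B q s"
    unfolding contract2_def by (simp only: sum_distrib_right, simp only: sum_distrib_left)
  finally show ?thesis .
qed

lemma contract4_product_14_23:
  "contract4 (\<lambda>a b c d. A a d * B b c) p q r s = contract2 A p s * contract2 B q r"
proof -
  have "contract4 (\<lambda>a b c d. A a d * B b c) p q r s
      = (\<Sum>a\<in>UNIV. \<Sum>b\<in>UNIV. \<Sum>d\<in>UNIV. \<Sum>c\<in>UNIV. A a d * B b c * p$a * q$b * r$c * s$d)"
    unfolding contract4_def by (rule sum.cong[OF refl], rule sum.cong[OF refl], rule sum.swap)
  also have "\<dots> = (\<Sum>a\<in>UNIV. \<Sum>d\<in>UNIV. \<Sum>b\<in>UNIV. \<Sum>c\<in>UNIV. (A a d * p$a * s$d) * (B b c * q$b * r$c))"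
    by (subst sum4_swap_23) (simp add: mult_ac)
  also have "\<dots> = contract2 A p s * contract2 B q r"
    unfolding contract2_def by (simp only: sum_distrib_right, simp only: sum_distrib_left)
  finally show ?thesis .
qed

lemma contract4_product_24_13:
  "contract4 (\<lambda>a b c d. B b d * A a c) p q r s = contract2 A p r * contract2 B q s"
  using contract4_product_13_24[of A B p q r s] by (simp add: mult.commute)

lemma contract4_product_23_14:
  "contract4 (\<lambda>a b c d. B b c * A a d) p q r s = contract2 A p s * contract2 B q r"
  using contract4_product_14_23[of A B p q r s] by (simp add: mult.commute)

lemma contract4_swap_first: "contract4 R p q r s = contract4 (\<lambda>a b c d. R b a c d) q p r s"
  unfolding contract4_def by (subst sum.swap) (simp add: mult_ac)

lemma contract4_swap_last: "contract4 R p q r s = contract4 (\<lambda>a b c d. R a b d c) p q s r"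
  unfolding contract4_def
  by (rule sum.cong[OF refl], rule sum.cong[OF refl], subst sum.swap) (simp add: mult_ac)

lemma contract4_first_index:
  "contract4 R p q r s
     = (\<Sum>b\<in>UNIV. \<Sum>c\<in>UNIV. \<Sum>d\<in>UNIV. (\<Sum>a\<in>UNIV. p$a * R a b c d) * q$b * r$c * s$d)"
proof -
  have "contract4 R p q r s = (\<Sum>b\<in>UNIV. \<Sum>c\<in>UNIV. \<Sum>a\<in>UNIV. \<Sum>d\<in>UNIV. p$a * R a b c d * q$b * r$c * s$d)"
    unfolding contract4_def by (subst sum.swap, subst sum4_swap_23) (simp add: mult_ac)
  also have "\<dots> = (\<Sum>b\<in>UNIV. \<Sum>c\<in>UNIV. \<Sum>d\<in>UNIV. \<Sum>a\<in>UNIV. p$a * R a b c d * q$b * r$c * s$d)"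
    by (rule sum.cong[OF refl], rule sum.cong[OF refl], rule sum.swap)
  finally show ?thesis by (simp add: sum_distrib_right)
qed

lemma contract4_antisym_last_diag:
  assumes "\<And>a b c d. R a b c d = - R a b d c"
  shows "contract4 R p q r r = 0"
proof -
  have "(\<lambda>a b c d. R a b d c) = (\<lambda>a b c d. - R a b c d)" using assms by (metis minus_minus)
  then have "contract4 R p q r r = - contract4 R p q r r"
    using contract4_swap_last[of R p q r r] contract4_minus[of R p q r r] by simp
  then show ?thesis by simp
qed

lemma contract4_antisym_first_diag:
  assumes "\<And>a b c d. R a b c d = - R b a c d"
  shows "contract4 R p p r s = 0"
proof -
  have "(\<lambda>a b c d. R b a c d) = (\<lambda>a b c d. - R a b c d)" using assms by (metis minus_minus)
  then have "contract4 R p p r s = - contract4 R p p r s"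
    using contract4_swap_first[of R p p r s] contract4_minus[of R p p r s] by simp
  then show ?thesis by simp
qed

lemma contract4_pair_sym:
  assumes "\<And>a b c d. R a b c d = - R b a c d" "\<And>a b c d. R a b c d = - R a b d c"
  shows "contract4 R p q p q = contract4 R q p q p"
proof -
  have "(\<lambda>a b c d. R b a c d) = (\<lambda>a b c d. - R a b c d)"
    "(\<lambda>a b c d. R a b d c) = (\<lambda>a b c d. - R a b c d)"
    using assms by (metis minus_minus)+
  then have "contract4 R p q p q = - contract4 R q p p q" "contract4 R q p p q = - contract4 R q p q p"
    using contract4_swap_first[of R p q p q] contract4_minus[of R q p p q]
      contract4_swap_last[of R q p p q] contract4_minus[of R q p q p] by simp_all
  then show ?thesis by simp
qed

lemma bilinear_sum_of_products:
  fixes T G :: "'n::finite \<Rightarrow> 'n \<Rightarrow> real"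
  assumes "\<And>b d. T b d = k * G b d + P b * X d + lam b * F d + H b * lam d + Y b * Q d"
  shows "(\<Sum>b\<in>UNIV. \<Sum>d\<in>UNIV. T b d * u b * v d) = k * (\<Sum>b\<in>UNIV. \<Sum>d\<in>UNIV. G b d * u b * v d)
     + (\<Sum>b\<in>UNIV. P b * u b) * (\<Sum>d\<in>UNIV. X d * v d) + (\<Sum>b\<in>UNIV. lam b * u b) * (\<Sum>d\<in>UNIV. F d * v d)
     + (\<Sum>b\<in>UNIV. H b * u b) * (\<Sum>d\<in>UNIV. lam d * v d) + (\<Sum>b\<in>UNIV. Y b * u b) * (\<Sum>d\<in>UNIV. Q d * v d)"
  unfolding sum_product by (simp add: assms sum.distrib sum_distrib_left algebra_simps)

section \<open>A null vector field with a null frame\<close>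

locale null_congruence = lorentzian_chart U g
  for U :: "(real^'n::finite) set" and g +
  fixes l nf :: "real^'n \<Rightarrow> real^'n" and mf :: "real^'n \<Rightarrow> nat \<Rightarrow> real^'n"
  assumes dim: "CARD('n) > 2" and l_smooth: "smooth_vf U l"
    and frame: "\<forall>x\<in>U. null_frame (g x) (l x) (nf x) (mf x)"
begin

abbreviation l_comp :: "'n \<Rightarrow> real^'n \<Rightarrow> real" where "l_comp a \<equiv> (\<lambda>y. l y $ a)"

lemma l_differentiable: "y \<in> U \<Longrightarrow> l_comp a differentiable (at y)"
  using l_smooth smooth_on_differentiable unfolding smooth_vf_def by blast

lemma pd_l_differentiable: "y \<in> U \<Longrightarrow> pd c (l_comp a) differentiable (at y)"
  using l_smooth smooth_on_differentiable smooth_on_pd unfolding smooth_vf_def by blast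

lemma pd2_l_commute: "y \<in> U \<Longrightarrow> pd c (pd d (l_comp a)) y = pd d (pd c (l_comp a)) y"
  using l_smooth smooth_on_pd_commute[OF _ open_U] unfolding smooth_vf_def by blast

lemma lower_differentiable: "y \<in> U \<Longrightarrow> lower g l b differentiable (at y)"
  unfolding lower_def[abs_def]
  by (auto intro!: differentiable_sum differentiable_mult g_differentiable l_differentiable)

lemma pd_lower: "y \<in> U \<Longrightarrow> pd d (lower g l b) y =
   (\<Sum>a\<in>UNIV. pd d (g_comp b a) y * l y$a + g y$b$a * pd d (l_comp a) y)"
  unfolding lower_def[abs_def]
  by (subst pd_sum) (auto intro!: differentiable_mult simp: pd_mult g_differentiable l_differentiable)

lemma pd_lower_differentiable: "y \<in> U \<Longrightarrow> pd d (lower g l b) differentiable (at y)"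
  by (rule differentiable_transform_within_open[OF open_U _ pd_lower[symmetric]])
    (auto intro!: differentiable_sum differentiable_mult differentiable_add g_differentiable
      l_differentiable pd_g_differentiable pd_l_differentiable)

lemma pd2_lower_commute:
  assumes x: "x \<in> U"
  shows "pd c (pd d (lower g l b)) x = pd d (pd c (lower g l b)) x"
proof -
  have pd2: "pd c (pd d (lower g l b)) x =
     (\<Sum>a\<in>UNIV. pd c (pd d (g_comp b a)) x * l x$a + pd d (g_comp b a) x * pd c (l_comp a) x
              + (pd c (g_comp b a) x * pd d (l_comp a) x + g x$b$a * pd c (pd d (l_comp a)) x))"
    for c d
  proof -
    have "pd c (pd d (lower g l b)) x
        = pd c (\<lambda>z. \<Sum>a\<in>UNIV. pd d (g_comp b a) z * l z$a + g z$b$a * pd d (l_comp a) z) x"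
      by (rule pd_transform_within_open[OF open_U x]) (rule pd_lower)
    also have "\<dots> = (\<Sum>a\<in>UNIV. pd c (\<lambda>z. pd d (g_comp b a) z * l z$a + g z$b$a * pd d (l_comp a) z) x)"
      by (rule pd_sum) (auto intro!: differentiable_mult differentiable_add g_differentiable
          l_differentiable pd_g_differentiable pd_l_differentiable x)
    finally show ?thesis
      by (simp add: pd_add pd_mult differentiable_mult g_differentiable l_differentiable
          pd_g_differentiable pd_l_differentiable x)
  qed
  show ?thesis
    unfolding pd2 using pd2_g_commute[OF x] pd2_l_commute[OF x] by (simp add: algebra_simps)
qed

lemma cov_low_differentiable: "y \<in> U \<Longrightarrow> cov_low g l b d differentiable (at y)"
  unfolding cov_low_def[abs_def]
  by (auto intro!: differentiable_diff differentiable_sum differentiable_mult pd_lower_differentiable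
      chr_differentiable lower_differentiable)

lemma pd_cov_low:
  assumes x: "x \<in> U"
  shows "pd c (cov_low g l b d) x = pd c (pd d (lower g l b)) x
   - (\<Sum>e\<in>UNIV. pd c (chr g e b d) x * lower g l e x + chr g e b d x * pd c (lower g l e) x)"
  unfolding cov_low_def[abs_def]
  by (subst pd_diff pd_sum,
      auto intro!: differentiable_sum differentiable_mult pd_lower_differentiable chr_differentiable
        lower_differentiable x simp: pd_mult chr_differentiable lower_differentiable x)+

text \<open>The second covariant derivative \<open>l\<^sub>b\<^sub>;\<^sub>d\<^sub>c\<close>.\<close>

definition cov2_low :: "'n \<Rightarrow> 'n \<Rightarrow> 'n \<Rightarrow> real^'n \<Rightarrow> real" where
  "cov2_low b d c x = pd c (cov_low g l b d) x
     - (\<Sum>e\<in>UNIV. chr g e c b x * cov_low g l e d x) - (\<Sum>e\<in>UNIV. chr g e c d x * cov_low g l b e x)"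

lemma ricci_identity:
  assumes x: "x \<in> U"
  shows "cov2_low b d c x - cov2_low b c d x = - (\<Sum>f\<in>UNIV. lower g l f x * riem_up g f b c d x)"
  by (rule ricci_identity_algebraic[where \<Gamma> = "\<lambda>e a b. chr g e a b x"
        and D\<Gamma> = "\<lambda>c e a b. pd c (chr g e a b) x" and Dl = "\<lambda>c e. pd c (lower g l e) x"
        and DDl = "\<lambda>c d b. pd c (pd d (lower g l b)) x" and L = "\<lambda>b d. cov_low g l b d x"
        and DL = "\<lambda>c b d. pd c (cov_low g l b d) x"])
    (auto intro: chr_sym pd_chr_sym pd2_lower_commute x
      simp: cov2_low_def cov_low_def pd_cov_low[OF x] riem_up_def)

lemma contract_l_riem:
  assumes x: "x \<in> U"
  shows "(\<Sum>a\<in>UNIV. l x$a * riem g a b c d x) = (\<Sum>f\<in>UNIV. lower g l f x * riem_up g f b c d x)"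
proof -
  have "(\<Sum>a\<in>UNIV. l x$a * riem g a b c d x)
      = (\<Sum>f\<in>UNIV. \<Sum>a\<in>UNIV. l x$a * g x$a$f * riem_up g f b c d x)"
    unfolding riem_def by (subst sum.swap) (simp add: sum_distrib_left mult.assoc)
  also have "\<dots> = (\<Sum>f\<in>UNIV. lower g l f x * riem_up g f b c d x)"
    unfolding lower_def
    by (rule sum.cong[OF refl]) (simp add: sum_distrib_left sum_distrib_right g_sym[OF x] mult_ac)
  finally show ?thesis .
qed

lemma null_frame_at: "y \<in> U \<Longrightarrow> null_frame (g y) (l y) (nf y) (mf y)"
  using frame by blast

lemma frame_products:
  assumes y: "y \<in> U"
  shows "gform (g y) (l y) (l y) = 0" "gform (g y) (nf y) (nf y) = 0" "gform (g y) (l y) (nf y) = 1"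
    and "\<And>i. i \<in> frame_idx TYPE('n) \<Longrightarrow> gform (g y) (l y) (mf y i) = 0"
    and "\<And>i. i \<in> frame_idx TYPE('n) \<Longrightarrow> gform (g y) (nf y) (mf y i) = 0"
    and "\<And>i j. i \<in> frame_idx TYPE('n) \<Longrightarrow> j \<in> frame_idx TYPE('n) \<Longrightarrow>
           gform (g y) (mf y i) (mf y j) = (if i = j then 1 else 0)"
  using null_frame_at[OF y] unfolding null_frame_def by auto

lemma gform_l_lower: "y \<in> U \<Longrightarrow> gform (g y) (l y) u = (\<Sum>b\<in>UNIV. lower g l b y * u$b)"
  unfolding gform_def lower_def
  by (subst sum.swap) (simp add: sum_distrib_right sum_distrib_left g_sym mult_ac)

lemma lower_frame:
  assumes y: "y \<in> U"
  shows "(\<Sum>c\<in>UNIV. lower g l c y * l y $c) = 0"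
    and "\<And>k. k \<in> frame_idx TYPE('n) \<Longrightarrow> (\<Sum>c\<in>UNIV. lower g l c y * mf y k $c) = 0"
  using gform_l_lower[OF y] frame_products[OF y] by metis+

lemma expansion_orthogonal_to_l:
  assumes y: "y \<in> U" and u: "(\<Sum>c\<in>UNIV. lower g l c y * u$c) = 0"
  shows "u = gform (g y) (nf y) u *\<^sub>R l y + (\<Sum>k\<in>frame_idx TYPE('n). gform (g y) (mf y k) u *\<^sub>R mf y k)"
  using null_frame_expansion[OF g_sym[OF y] _ null_frame_at[OF y], of u] dim gform_l_lower[OF y] u
  by simp

lemma ginv_null_frame:
  "y \<in> U \<Longrightarrow> ginv g y $a$b = l y$a * nf y$b + nf y$a * l y$b + (\<Sum>k\<in>frame_idx TYPE('n). mf y k$a * mf y k$b)"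
  using dim by (intro matrix_inv_null_frame[OF g_sym]) (auto simp: frame ginv_right)

definition cov_up :: "'n \<Rightarrow> 'n \<Rightarrow> real^'n \<Rightarrow> real" where
  "cov_up h d y = pd d (l_comp h) y + (\<Sum>e\<in>UNIV. chr g h d e y * l y$e)"

lemma cov_low_eq_lower_cov_up:
  assumes y: "y \<in> U"
  shows "cov_low g l b d y = (\<Sum>h\<in>UNIV. g y$b$h * cov_up h d y)"
proof -
  have pdg: "pd d (g_comp b a) y * l y$a
      = (\<Sum>e\<in>UNIV. chr g e d b y * g y$e$a * l y$a) + (\<Sum>e\<in>UNIV. g y$b$e * chr g e d a y * l y$a)" for a
    by (simp add: pd_g_eq_chr[OF y] sum_distrib_left sum_distrib_right algebra_simps)
  have chr_term: "(\<Sum>c\<in>UNIV. chr g c b d y * lower g l c y)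
      = (\<Sum>a\<in>UNIV. \<Sum>e\<in>UNIV. chr g e d b y * g y$e$a * l y$a)"
    unfolding lower_def by (subst sum.swap) (simp add: sum_distrib_left chr_sym[OF y, of _ b d] mult_ac)
  have "cov_low g l b d y = (\<Sum>a\<in>UNIV. g y$b$a * pd d (l_comp a) y)
      + (\<Sum>a\<in>UNIV. \<Sum>e\<in>UNIV. g y$b$e * chr g e d a y * l y$a)"
    unfolding cov_low_def pd_lower[OF y] chr_term by (simp add: pdg sum.distrib)
  also have "\<dots> = (\<Sum>h\<in>UNIV. g y$b$h * cov_up h d y)"
    unfolding cov_up_def
    by (subst sum.swap) (simp add: algebra_simps sum.distrib sum_distrib_left)
  finally show ?thesis .
qed

text \<open>Since \<open>l\<close> is null, \<open>0 = \<partial>\<^sub>d (l\<^sup>b l\<^sub>b) = 2 l\<^sup>b l\<^sub>b\<^sub>;\<^sub>d\<close>.\<close>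

lemma l_cov_low_null:
  assumes y: "y \<in> U"
  shows "(\<Sum>b\<in>UNIV. l y$b * cov_low g l b d y) = 0"
proof -
  have null: "(\<Sum>b\<in>UNIV. l z$b * lower g l b z) = 0" if "z \<in> U" for z
    using lower_frame(1)[OF that] by (simp add: mult.commute)
  have "pd d (\<lambda>z. \<Sum>b\<in>UNIV. l z$b * lower g l b z) y = pd d (\<lambda>z. 0) y"
    by (rule pd_transform_within_open[OF open_U y]) (rule null)
  then have pd0: "(\<Sum>b\<in>UNIV. pd d (l_comp b) y * lower g l b y + l y$b * pd d (lower g l b) y) = 0"
    by (subst (asm) pd_sum) (auto intro!: differentiable_mult l_differentiable lower_differentiable y
        simp: pd_mult l_differentiable lower_differentiable y)
  have chr_swap: "(\<Sum>b\<in>UNIV. \<Sum>c\<in>UNIV. l y$b * chr g c b d y * lower g l c y)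
      = (\<Sum>h\<in>UNIV. \<Sum>e\<in>UNIV. lower g l h y * chr g h d e y * l y$e)"
    by (subst sum.swap) (simp add: chr_sym[OF y, of _ d] mult_ac)
  have via_lower: "(\<Sum>b\<in>UNIV. l y$b * cov_low g l b d y) = (\<Sum>b\<in>UNIV. l y$b * pd d (lower g l b) y)
     - (\<Sum>h\<in>UNIV. \<Sum>e\<in>UNIV. lower g l h y * chr g h d e y * l y$e)"
    unfolding cov_low_def chr_swap[symmetric]
    by (simp add: algebra_simps sum_subtractf sum_distrib_left)
  have "(\<Sum>b\<in>UNIV. l y$b * cov_low g l b d y) = (\<Sum>h\<in>UNIV. \<Sum>b\<in>UNIV. l y$b * g y$b$h * cov_up h d y)"
    unfolding cov_low_eq_lower_cov_up[OF y] by (subst sum.swap) (simp add: sum_distrib_left mult.assoc)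
  also have "\<dots> = (\<Sum>h\<in>UNIV. lower g l h y * cov_up h d y)"
    unfolding lower_def
    by (rule sum.cong[OF refl]) (simp add: sum_distrib_left sum_distrib_right g_sym[OF y] mult_ac)
  finally have via_up: "(\<Sum>b\<in>UNIV. l y$b * cov_low g l b d y) = (\<Sum>h\<in>UNIV. lower g l h y * pd d (l_comp h) y)
     + (\<Sum>h\<in>UNIV. \<Sum>e\<in>UNIV. lower g l h y * chr g h d e y * l y$e)"
    unfolding cov_up_def by (simp add: algebra_simps sum.distrib sum_distrib_left)
  have "2 * (\<Sum>b\<in>UNIV. l y$b * cov_low g l b d y)
      = (\<Sum>b\<in>UNIV. pd d (l_comp b) y * lower g l b y + l y$b * pd d (lower g l b) y)"
    using via_lower via_up by (simp add: sum.distrib mult_ac)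
  then show ?thesis using pd0 by simp
qed

lemma lower_nonzero: "y \<in> U \<Longrightarrow> \<exists>a. lower g l a y \<noteq> 0"
  using frame_products(3) gform_l_lower by (metis (no_types, lifting) mult_zero_left sum.neutral zero_neq_one)

definition ricci_ll :: "real^'n \<Rightarrow> real" where
  "ricci_ll x = contract2 (\<lambda>a c. ricci g c a x) (l x) (l x)"

lemma C0i0j_eq_riem:
  assumes x: "x \<in> U" and i: "i \<in> frame_idx TYPE('n)" and j: "j \<in> frame_idx TYPE('n)"
  shows "C0i0j g l (mf x) x i j = contract4 (\<lambda>a b c d. riem g a b c d x) (l x) (mf x i) (l x) (mf x j)
     - (if i = j then 1 else 0) * ricci_ll x / (real CARD('n) - 2)"
proof -
  let ?k1 = "1 / (real CARD('n) - 2)" and ?k2 = "scal g x / ((real CARD('n) - 1) * (real CARD('n) - 2))"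
  have weyl: "(\<lambda>a b c d. weyl g a b c d x) = (\<lambda>a b c d. riem g a b c d x
     - ?k1 * (g x$a$c * ricci g d b x - g x$a$d * ricci g c b x - g x$b$c * ricci g d a x + g x$b$d * ricci g c a x)
     + ?k2 * (g x$a$c * g x$d$b - g x$a$d * g x$c$b))"
    by (intro ext) (simp add: weyl_def Let_def)
  have C: "C0i0j g l (mf x) x i j = contract4 (\<lambda>a b c d. weyl g a b c d x) (l x) (mf x i) (l x) (mf x j)"
    unfolding C0i0j_def contract4_def by simp
  have "contract2 (\<lambda>a c. g x$a$c) (l x) (l x) = 0"
    and "contract2 (\<lambda>a d. g x$a$d) (l x) (mf x j) = 0"
    and "contract2 (\<lambda>b c. g x$b$c) (mf x i) (l x) = 0"
    and "contract2 (\<lambda>b d. g x$b$d) (mf x i) (mf x j) = (if i = j then 1 else 0)"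
    using frame_products[OF x] i j gform_g_sym[OF x, of "mf x i" "l x"] by (simp_all add: contract2_matrix)
  then show ?thesis
    unfolding C weyl contract4_add contract4_diff contract4_scale contract4_product_13_24
      contract4_product_14_23 contract4_product_24_13 contract4_product_23_14 ricci_ll_def
    by simp
qed

lemma ricci_ll_frame_trace:
  assumes x: "x \<in> U"
  shows "ricci_ll x
    = (\<Sum>k\<in>frame_idx TYPE('n). contract4 (\<lambda>a b c d. riem g a b c d x) (l x) (mf x k) (l x) (mf x k))"
proof -
  let ?R = "\<lambda>a b c d. riem g a b c d x"
  define M where "M = (\<chi> e f. \<Sum>a\<in>UNIV. \<Sum>c\<in>UNIV. riem g f c e a x * l x$a * l x$c)"
  have gM: "gform M u v = contract4 ?R v (l x) u (l x)" for u v
  proof -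
    have "gform M u v = (\<Sum>e\<in>UNIV. \<Sum>f\<in>UNIV. \<Sum>a\<in>UNIV. \<Sum>c\<in>UNIV. riem g f c e a x * v$f * l x$c * u$e * l x$a)"
      unfolding gform_def M_def by (simp add: sum_distrib_left sum_distrib_right mult_ac)
    also have "\<dots> = (\<Sum>f\<in>UNIV. \<Sum>e\<in>UNIV. \<Sum>c\<in>UNIV. \<Sum>a\<in>UNIV. riem g f c e a x * v$f * l x$c * u$e * l x$a)"
      by (subst sum.swap) (rule sum.cong[OF refl], rule sum.cong[OF refl], rule sum.swap)
    also have "\<dots> = contract4 ?R v (l x) u (l x)"
      unfolding contract4_def by (rule sum.cong[OF refl], rule sum.swap)
    finally show ?thesis .
  qed
  have "ricci_ll x = (\<Sum>a\<in>UNIV. \<Sum>c\<in>UNIV. \<Sum>e\<in>UNIV. \<Sum>f\<in>UNIV. ginv g x $e$f * riem g f c e a x * l x$a * l x$c)"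
    unfolding ricci_ll_def contract2_def ricci_def riem_up_eq_ginv_riem[OF x]
    by (simp add: sum_distrib_left sum_distrib_right mult_ac)
  also have "\<dots> = (\<Sum>e\<in>UNIV. \<Sum>f\<in>UNIV. \<Sum>a\<in>UNIV. \<Sum>c\<in>UNIV. ginv g x $e$f * riem g f c e a x * l x$a * l x$c)"
    by (rule sum4_swap_pairs)
  also have "\<dots> = (\<Sum>e\<in>UNIV. \<Sum>f\<in>UNIV. ginv g x $e$f * M$e$f)"
    unfolding M_def by (simp add: sum_distrib_left mult_ac)
  also have "\<dots> = gform M (l x) (nf x) + gform M (nf x) (l x) + (\<Sum>k\<in>frame_idx TYPE('n). gform M (mf x k) (mf x k))"
    by (rule trace_null_frame) (rule ginv_null_frame[OF x])
  also have "\<dots> = (\<Sum>k\<in>frame_idx TYPE('n). contract4 ?R (l x) (mf x k) (l x) (mf x k))"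
  proof -
    have "gform M (l x) (nf x) = 0"
      unfolding gM by (rule contract4_antisym_last_diag) (rule riem_antisym_last)
    moreover have "gform M (nf x) (l x) = 0"
      unfolding gM by (rule contract4_antisym_first_diag) (rule riem_antisym_first[OF x])
    moreover have "gform M (mf x k) (mf x k) = contract4 ?R (l x) (mf x k) (l x) (mf x k)" for k
      unfolding gM by (rule contract4_pair_sym) (rule riem_antisym_first[OF x], rule riem_antisym_last)
    ultimately show ?thesis by simp
  qed
  finally show ?thesis .
qed

end

section \<open>Geodetic, shearfree and twistfree congruences\<close>

text \<open>The component \<open>a0\<close> is used to divide by \<open>l\<^sub>a\<^sub>0\<close> on the open set \<open>V\<close> where it does not
  vanish; since \<open>l \<noteq> 0\<close>, these sets cover \<open>U\<close> as \<open>a0\<close> varies.\<close>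

locale shearfree_twistfree_geodetic = null_congruence U g l nf mf
  for U :: "(real^'n::finite) set" and g l nf mf +
  fixes a0 :: 'n
  assumes geod: "geodetic g U l"
    and shearfree: "\<forall>x\<in>U. \<forall>i\<in>frame_idx TYPE('n). \<forall>j\<in>frame_idx TYPE('n). shear g l (mf x) x i j = 0"
    and twistfree: "\<forall>x\<in>U. \<forall>i\<in>frame_idx TYPE('n). \<forall>j\<in>frame_idx TYPE('n). twist g l (mf x) x i j = 0"
begin

definition "V = U \<inter> lower g l a0 -` (- {0})"

lemma V_subset: "y \<in> V \<Longrightarrow> y \<in> U"
  unfolding V_def by auto

lemma lower_a0_nonzero: "y \<in> V \<Longrightarrow> lower g l a0 y \<noteq> 0"
  unfolding V_def by auto

lemma open_V: "open V"
proof -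
  have "continuous_on U (lower g l a0)"
    by (rule continuous_at_imp_continuous_on)
      (auto intro: differentiable_imp_continuous_within lower_differentiable)
  then show ?thesis unfolding V_def by (rule continuous_open_preimage[OF _ open_U]) auto
qed

definition accel :: "'n \<Rightarrow> real^'n \<Rightarrow> real" where
  "accel a y = (\<Sum>b\<in>UNIV. l y$b * cov_low g l a b y)"

definition accel_factor :: "real^'n \<Rightarrow> real" where
  "accel_factor y = accel a0 y / lower g l a0 y"

lemma accel_eq: assumes y: "y \<in> V" shows "accel a y = accel_factor y * lower g l a y"
proof -
  obtain f where "\<And>a. accel a y = f * lower g l a y"
    using geod V_subset[OF y] unfolding geodetic_def accel_def by blast
  then show ?thesis using lower_a0_nonzero[OF y] by (simp add: accel_factor_def)
qed

definition Lmat :: "real^'n \<Rightarrow> real^'n^'n" where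
  "Lmat y = (\<chi> a b. cov_low g l a b y)"

text \<open>The expansion as a scalar field defined without the frame: besides \<open>(n - 2) \<theta>\<close>, the
  trace \<open>L\<^sup>a\<^sub>a\<close> contains \<open>L(n, l) = \<epsilon>\<close>, where \<open>l\<^sup>b l\<^sub>a\<^sub>;\<^sub>b = \<epsilon> l\<^sub>a\<close>.\<close>

definition theta :: "real^'n \<Rightarrow> real" where
  "theta y = ((\<Sum>a\<in>UNIV. \<Sum>b\<in>UNIV. ginv g y$a$b * cov_low g l a b y) - accel_factor y)
               / (real CARD('n) - 2)"

lemma gform_Lmat_l_left: "y \<in> U \<Longrightarrow> gform (Lmat y) (l y) w = 0"
  unfolding gform_def Lmat_def
  using l_cov_low_null by (subst sum.swap) (simp add: sum_distrib_left[symmetric] mult_ac)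

lemma gform_Lmat_l_right:
  "y \<in> V \<Longrightarrow> gform (Lmat y) u (l y) = accel_factor y * (\<Sum>a\<in>UNIV. lower g l a y * u$a)"
  unfolding gform_def Lmat_def
  by (simp add: accel_eq[unfolded accel_def] sum_distrib_left[symmetric] sum_distrib_left mult_ac)

lemma expansion_eq_theta: assumes y: "y \<in> V" shows "expansion g l (mf y) y = theta y"
proof -
  have yU: "y \<in> U" using V_subset[OF y] .
  have "gform (Lmat y) (nf y) (l y) = accel_factor y"
    using gform_Lmat_l_right[OF y] frame_products(3)[OF yU] gform_l_lower[OF yU, of "nf y"] by simp
  then have "(\<Sum>a\<in>UNIV. \<Sum>b\<in>UNIV. ginv g y$a$b * cov_low g l a b y)
      = accel_factor y + (\<Sum>k\<in>frame_idx TYPE('n). Lij g l (mf y) y k k)"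
    using trace_null_frame[OF ginv_null_frame[OF yU], of "Lmat y"] gform_Lmat_l_left[OF yU]
    by (simp add: Lmat_def Lij_eq_gform)
  moreover have "real CARD('n) - 2 \<noteq> 0" using dim by simp
  ultimately show ?thesis unfolding theta_def expansion_def by (simp add: field_simps)
qed

lemma Lij_eq_theta:
  assumes y: "y \<in> V" and i: "i \<in> frame_idx TYPE('n)" and j: "j \<in> frame_idx TYPE('n)"
  shows "Lij g l (mf y) y i j = (if i = j then theta y else 0)"
proof -
  have "shear g l (mf y) y i j = 0" "twist g l (mf y) y i j = 0"
    using shearfree twistfree V_subset[OF y] i j by auto
  then show ?thesis
    unfolding shear_def twist_def expansion_eq_theta[OF y] by (auto simp: field_simps split: if_splits)
qed

lemma Lmat_frame_l:
  assumes y: "y \<in> V" and v: "(\<Sum>c\<in>UNIV. lower g l c y * v$c) = 0"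
    and w: "w = l y \<or> (\<exists>k\<in>frame_idx TYPE('n). w = mf y k)"
  shows "gform (Lmat y) w v = theta y * gform (g y) w v"
proof -
  have yU: "y \<in> U" using V_subset[OF y] .
  show ?thesis
  proof (cases "w = l y")
    case True
    then show ?thesis using gform_Lmat_l_left[OF yU] gform_l_lower[OF yU] v by simp
  next
    case False
    then obtain k where k: "k \<in> frame_idx TYPE('n)" "w = mf y k" using w by blast
    have on_l: "gform (Lmat y) (mf y k) (l y) = theta y * gform (g y) (mf y k) (l y)"
      using gform_Lmat_l_right[OF y] lower_frame(2)[OF yU k(1)] frame_products(4)[OF yU k(1)]
        gform_g_sym[OF yU, of "mf y k" "l y"] by simp
    have on_m: "gform (Lmat y) (mf y k) (mf y j) = theta y * gform (g y) (mf y k) (mf y j)"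
      if j: "j \<in> frame_idx TYPE('n)" for j
      using Lij_eq_theta[OF y k(1) j] frame_products(6)[OF yU k(1) j] by (simp add: Lij_eq_gform Lmat_def)
    let ?e = "gform (g y) (nf y) v *\<^sub>R l y + (\<Sum>j\<in>frame_idx TYPE('n). gform (g y) (mf y j) v *\<^sub>R mf y j)"
    have "gform (Lmat y) (mf y k) ?e = theta y * gform (g y) (mf y k) ?e"
      by (simp add: gform_add_right gform_scale_right gform_sum_right on_l on_m sum_distrib_left
          algebra_simps cong: sum.cong)
    then show ?thesis using k(2) expansion_orthogonal_to_l[OF yU v, symmetric] by simp
  qed
qed

lemma Lmat_on_l_orthogonal:
  assumes y: "y \<in> V" and u: "(\<Sum>c\<in>UNIV. lower g l c y * u$c) = 0"
    and v: "(\<Sum>c\<in>UNIV. lower g l c y * v$c) = 0"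
  shows "gform (Lmat y) u v = theta y * gform (g y) u v"
proof -
  have yU: "y \<in> U" using V_subset[OF y] .
  let ?e = "gform (g y) (nf y) u *\<^sub>R l y + (\<Sum>k\<in>frame_idx TYPE('n). gform (g y) (mf y k) u *\<^sub>R mf y k)"
  have on_l: "gform (Lmat y) (l y) v = theta y * gform (g y) (l y) v"
    and on_m: "\<And>k. k \<in> frame_idx TYPE('n) \<Longrightarrow> gform (Lmat y) (mf y k) v = theta y * gform (g y) (mf y k) v"
    using Lmat_frame_l[OF y v] by blast+
  have "gform (Lmat y) ?e v = theta y * gform (g y) ?e v"
    by (simp add: gform_add_left gform_scale_left gform_sum_left on_l on_m sum_distrib_left
        algebra_simps cong: sum.cong)
  then show ?thesis using expansion_orthogonal_to_l[OF yU u, symmetric] by simp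
qed

definition S :: "'n \<Rightarrow> 'n \<Rightarrow> real^'n \<Rightarrow> real" where
  "S a b y = cov_low g l a b y - theta y * g y$a$b"

definition X :: "'n \<Rightarrow> real^'n \<Rightarrow> real" where
  "X b y = S a0 b y / lower g l a0 y"

definition Y :: "'n \<Rightarrow> real^'n \<Rightarrow> real" where
  "Y a y = S a a0 y / lower g l a0 y - lower g l a y * S a0 a0 y / (lower g l a0 y)^2"

text \<open>\<open>S\<close> vanishes on the orthogonal complement of \<open>l\<close>, which is spanned by the projections
  \<open>e\<^sub>c - (l\<^sub>c / l\<^sub>a\<^sub>0) e\<^sub>a\<^sub>0\<close> of the coordinate vectors.\<close>

lemma cov_low_decomposition:
  assumes y: "y \<in> V"
  shows "cov_low g l a b y = theta y * g y$a$b + lower g l a y * X b y + Y a y * lower g l b y"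
proof -
  define lm where "lm c = lower g l c y" for c
  have l0: "lm a0 \<noteq> 0" using lower_a0_nonzero[OF y] by (simp add: lm_def)
  define proj where "proj c = axis c 1 - (lm c / lm a0) *\<^sub>R axis a0 (1::real)" for c
  have axis_dot: "(\<Sum>e\<in>UNIV. lm e * axis c (1::real) $ e) = lm c" for c
    unfolding axis_def by (simp add: sum_kronecker)
  have "(\<Sum>e\<in>UNIV. lm e * proj c $ e)
      = (\<Sum>e\<in>UNIV. lm e * axis c 1 $ e) - (lm c / lm a0) * (\<Sum>e\<in>UNIV. lm e * axis a0 1 $ e)" for c
    by (simp add: proj_def algebra_simps sum_subtractf sum_distrib_left)
  then have orth: "(\<Sum>e\<in>UNIV. lower g l e y * proj c $ e) = 0" for c
    using l0 by (simp add: axis_dot lm_def[symmetric])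
  have "gform (Lmat y) (proj a) (proj b) - theta y * gform (g y) (proj a) (proj b)
      = S a b y - (lm b / lm a0) * S a a0 y - (lm a / lm a0) * S a0 b y
        + (lm a / lm a0) * (lm b / lm a0) * S a0 a0 y"
    unfolding proj_def
    by (simp add: gform_diff_left gform_diff_right gform_scale_left gform_scale_right gform_axis
        Lmat_def S_def algebra_simps)
  then have "S a b y = (lm b / lm a0) * S a a0 y + (lm a / lm a0) * S a0 b y
      - (lm a / lm a0) * (lm b / lm a0) * S a0 a0 y"
    using Lmat_on_l_orthogonal[OF y orth orth] by simp
  also have "\<dots> = lm a * X b y + Y a y * lm b"
    unfolding X_def Y_def lm_def[symmetric] using l0 by (simp add: field_simps power2_eq_square)
  finally show ?thesis unfolding S_def by (simp add: lm_def)
qed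

lemma accel_differentiable: "y \<in> U \<Longrightarrow> accel a differentiable (at y)"
  unfolding accel_def[abs_def]
  by (auto intro!: differentiable_sum differentiable_mult l_differentiable cov_low_differentiable)

lemma accel_factor_differentiable: "y \<in> V \<Longrightarrow> accel_factor differentiable (at y)"
  unfolding accel_factor_def[abs_def]
  by (auto intro!: differentiable_divide accel_differentiable lower_differentiable V_subset
      simp: lower_a0_nonzero)

lemma theta_differentiable: "y \<in> V \<Longrightarrow> theta differentiable (at y)"
  unfolding theta_def[abs_def] using dim
  by (auto intro!: differentiable_divide differentiable_diff differentiable_sum differentiable_mult
      ginv_differentiable cov_low_differentiable accel_factor_differentiable V_subset)

lemma S_differentiable: "y \<in> V \<Longrightarrow> S a b differentiable (at y)"
  unfolding S_def[abs_def]
  by (auto intro!: differentiable_diff differentiable_mult cov_low_differentiable theta_differentiable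
      g_differentiable V_subset)

lemma X_differentiable: "y \<in> V \<Longrightarrow> X b differentiable (at y)"
  unfolding X_def[abs_def]
  by (auto intro!: differentiable_divide S_differentiable lower_differentiable V_subset
      simp: lower_a0_nonzero)

lemma Y_differentiable: "y \<in> V \<Longrightarrow> Y a differentiable (at y)"
  unfolding Y_def[abs_def]
  by (auto intro!: differentiable_divide differentiable_diff differentiable_mult differentiable_power
      S_differentiable lower_differentiable V_subset simp: lower_a0_nonzero)

lemma cov2_low_decomposition:
  assumes y: "y \<in> V"
  shows "cov2_low b d c y = pd c theta y * g y$b$d + cov_low g l b c y * X d y
     + lower g l b y * (pd c (X d) y - (\<Sum>e\<in>UNIV. chr g e c d y * X e y))
     + (pd c (Y b) y - (\<Sum>e\<in>UNIV. chr g e c b y * Y e y)) * lower g l d y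
     + Y b y * cov_low g l d c y"
proof -
  have yU: "y \<in> U" using V_subset[OF y] .
  have "pd c (cov_low g l b d) y
      = pd c (\<lambda>z. theta z * g z$b$d + lower g l b z * X d z + Y b z * lower g l d z) y"
    by (rule pd_transform_within_open[OF open_V y]) (rule cov_low_decomposition)
  also have "\<dots> = pd c theta y * g y$b$d + theta y * pd c (g_comp b d) y
      + (pd c (lower g l b) y * X d y + lower g l b y * pd c (X d) y)
      + (pd c (Y b) y * lower g l d y + Y b y * pd c (lower g l d) y)"
    by (simp add: pd_add pd_mult theta_differentiable g_differentiable X_differentiable
        Y_differentiable lower_differentiable y yU differentiable_add differentiable_mult)
  finally have pd_cov: "pd c (cov_low g l b d) y = \<dots>" .
  have chr_b: "(\<Sum>e\<in>UNIV. chr g e c b y * cov_low g l e d y) = theta y * (\<Sum>e\<in>UNIV. chr g e c b y * g y$e$d)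
      + (\<Sum>e\<in>UNIV. chr g e c b y * lower g l e y) * X d y + (\<Sum>e\<in>UNIV. chr g e c b y * Y e y) * lower g l d y"
    by (simp add: cov_low_decomposition[OF y] algebra_simps sum.distrib sum_distrib_left sum_distrib_right)
  have chr_d: "(\<Sum>e\<in>UNIV. chr g e c d y * cov_low g l b e y) = theta y * (\<Sum>e\<in>UNIV. chr g e c d y * g y$b$e)
      + lower g l b y * (\<Sum>e\<in>UNIV. chr g e c d y * X e y) + Y b y * (\<Sum>e\<in>UNIV. chr g e c d y * lower g l e y)"
    by (simp add: cov_low_decomposition[OF y] algebra_simps sum.distrib sum_distrib_left sum_distrib_right)
  have cov_c: "cov_low g l p c y = pd c (lower g l p) y - (\<Sum>e\<in>UNIV. chr g e c p y * lower g l e y)" for p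
    unfolding cov_low_def using chr_sym[OF yU] by simp
  show ?thesis
    unfolding cov2_low_def pd_cov chr_b chr_d cov_c pd_g_eq_chr[OF yU] by (simp add: algebra_simps)
qed

lemma accel_frame:
  assumes y: "y \<in> V" and k: "k \<in> frame_idx TYPE('n)"
  shows "(\<Sum>b\<in>UNIV. accel b y * mf y k $ b) = 0"
  using lower_frame(2)[OF V_subset[OF y] k]
  by (simp add: accel_eq[OF y] sum_distrib_left[symmetric] mult.assoc)

text \<open>The frame components of \<open>l\<^sup>c l\<^sub>b\<^sub>;\<^sub>d\<^sub>c\<close>, i.e. the derivative of \<open>L\<^sub>i\<^sub>j = \<theta> \<delta>\<^sub>i\<^sub>j\<close> along \<open>l\<close>.\<close>

lemma cov2_low_along_l_frame:
  assumes y: "y \<in> V" and i: "i \<in> frame_idx TYPE('n)" and j: "j \<in> frame_idx TYPE('n)"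
  shows "(\<Sum>b\<in>UNIV. \<Sum>d\<in>UNIV. (\<Sum>c\<in>UNIV. cov2_low b d c y * l y$c) * mf y i $ b * mf y j $ d)
    = (\<Sum>c\<in>UNIV. pd c theta y * l y$c) * (if i = j then 1 else 0)"
proof -
  have yU: "y \<in> U" using V_subset[OF y] .
  let ?DX = "\<lambda>d. \<Sum>c\<in>UNIV. (pd c (X d) y - (\<Sum>e\<in>UNIV. chr g e c d y * X e y)) * l y$c"
  let ?DY = "\<lambda>b. \<Sum>c\<in>UNIV. (pd c (Y b) y - (\<Sum>e\<in>UNIV. chr g e c b y * Y e y)) * l y$c"
  have "(\<Sum>c\<in>UNIV. cov2_low b d c y * l y$c) = (\<Sum>c\<in>UNIV. pd c theta y * l y$c) * g y$b$d
     + accel b y * X d y + lower g l b y * ?DX d + ?DY b * lower g l d y + Y b y * accel d y" for b d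
    unfolding cov2_low_decomposition[OF y] accel_def
    by (simp add: algebra_simps sum.distrib sum_subtractf sum_distrib_left sum_distrib_right)
  then have "(\<Sum>b\<in>UNIV. \<Sum>d\<in>UNIV. (\<Sum>c\<in>UNIV. cov2_low b d c y * l y$c) * mf y i $ b * mf y j $ d)
    = (\<Sum>c\<in>UNIV. pd c theta y * l y$c) * (\<Sum>b\<in>UNIV. \<Sum>d\<in>UNIV. g y$b$d * mf y i $ b * mf y j $ d)
     + (\<Sum>b\<in>UNIV. accel b y * mf y i $ b) * (\<Sum>d\<in>UNIV. X d y * mf y j $ d)
     + (\<Sum>b\<in>UNIV. lower g l b y * mf y i $ b) * (\<Sum>d\<in>UNIV. ?DX d * mf y j $ d)
     + (\<Sum>b\<in>UNIV. ?DY b * mf y i $ b) * (\<Sum>d\<in>UNIV. lower g l d y * mf y j $ d)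
     + (\<Sum>b\<in>UNIV. Y b y * mf y i $ b) * (\<Sum>d\<in>UNIV. accel d y * mf y j $ d)"
    by (rule bilinear_sum_of_products)
  also have "\<dots> = (\<Sum>c\<in>UNIV. pd c theta y * l y$c) * (if i = j then 1 else 0)"
    using accel_frame[OF y i] accel_frame[OF y j] lower_frame(2)[OF yU i] lower_frame(2)[OF yU j]
      frame_products(6)[OF yU i j]
    unfolding gform_def by simp
  finally show ?thesis .
qed

text \<open>Contracting \<open>l\<^sub>b\<^sub>;\<^sub>d\<^sub>c\<close> with \<open>l\<^sup>d\<close>: differentiate the geodesic equation \<open>l\<^sup>d l\<^sub>b\<^sub>;\<^sub>d = \<epsilon> l\<^sub>b\<close>.\<close>

lemma cov2_low_contract_l:
  assumes y: "y \<in> V"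
  shows "(\<Sum>d\<in>UNIV. cov2_low b d c y * l y$d) = pd c accel_factor y * lower g l b y
     + accel_factor y * cov_low g l b c y - (\<Sum>e\<in>UNIV. cov_low g l b e y * cov_up e c y)"
proof -
  have yU: "y \<in> U" using V_subset[OF y] .
  have "pd c (accel b) y = pd c (\<lambda>z. accel_factor z * lower g l b z) y"
    by (rule pd_transform_within_open[OF open_V y]) (rule accel_eq)
  moreover have "pd c (accel b) y
      = (\<Sum>d\<in>UNIV. pd c (l_comp d) y * cov_low g l b d y + l y$d * pd c (cov_low g l b d) y)"
    unfolding accel_def[abs_def]
    by (subst pd_sum) (auto intro!: differentiable_mult l_differentiable cov_low_differentiable yU
        simp: pd_mult l_differentiable cov_low_differentiable yU)
  ultimately have pd_accel: "(\<Sum>d\<in>UNIV. l y$d * pd c (cov_low g l b d) y)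
      = pd c accel_factor y * lower g l b y + accel_factor y * pd c (lower g l b) y
        - (\<Sum>d\<in>UNIV. pd c (l_comp d) y * cov_low g l b d y)"
    by (simp add: pd_mult accel_factor_differentiable lower_differentiable y yU sum.distrib)
  have chr_b: "(\<Sum>d\<in>UNIV. (\<Sum>e\<in>UNIV. chr g e c b y * cov_low g l e d y) * l y$d)
      = accel_factor y * (\<Sum>e\<in>UNIV. chr g e c b y * lower g l e y)"
  proof -
    have "(\<Sum>d\<in>UNIV. (\<Sum>e\<in>UNIV. chr g e c b y * cov_low g l e d y) * l y$d)
       = (\<Sum>e\<in>UNIV. chr g e c b y * accel e y)"
      unfolding accel_def by (simp add: sum_distrib_left sum_distrib_right mult_ac) (rule sum.swap)
    then show ?thesis by (simp add: accel_eq[OF y] sum_distrib_left mult_ac)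
  qed
  have chr_d: "(\<Sum>d\<in>UNIV. (\<Sum>e\<in>UNIV. chr g e c d y * cov_low g l b e y) * l y$d)
      = (\<Sum>e\<in>UNIV. cov_low g l b e y * (\<Sum>d\<in>UNIV. chr g e c d y * l y$d))"
    by (simp add: sum_distrib_left sum_distrib_right mult_ac) (rule sum.swap)
  have cov_bc: "cov_low g l b c y = pd c (lower g l b) y - (\<Sum>e\<in>UNIV. chr g e c b y * lower g l e y)"
    unfolding cov_low_def using chr_sym[OF yU] by simp
  have "(\<Sum>d\<in>UNIV. cov2_low b d c y * l y$d) = (\<Sum>d\<in>UNIV. l y$d * pd c (cov_low g l b d) y)
     - (\<Sum>d\<in>UNIV. (\<Sum>e\<in>UNIV. chr g e c b y * cov_low g l e d y) * l y$d)
     - (\<Sum>d\<in>UNIV. (\<Sum>e\<in>UNIV. chr g e c d y * cov_low g l b e y) * l y$d)"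
    unfolding cov2_low_def by (simp add: algebra_simps sum_subtractf sum.distrib)
  then show ?thesis
    unfolding pd_accel chr_b chr_d cov_bc cov_up_def
    by (simp add: algebra_simps sum.distrib sum_subtractf sum_distrib_left)
qed

lemma gform_cov_up_frame:
  assumes y: "y \<in> U"
  shows "gform (g y) u (\<chi> e. \<Sum>c\<in>UNIV. cov_up e c y * mf y j $ c) = gform (Lmat y) u (mf y j)"
proof -
  have "gform (g y) u (\<chi> e. \<Sum>c\<in>UNIV. cov_up e c y * mf y j $ c)
      = (\<Sum>a\<in>UNIV. \<Sum>c\<in>UNIV. \<Sum>e\<in>UNIV. u$a * (g y$a$e * cov_up e c y) * mf y j $ c)"
    unfolding gform_def
    by (simp add: sum_distrib_left mult_ac) (rule sum.cong[OF refl], rule sum.swap)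
  also have "\<dots> = gform (Lmat y) u (mf y j)"
    unfolding gform_def Lmat_def cov_low_eq_lower_cov_up[OF y]
    by (simp add: sum_distrib_left sum_distrib_right mult_ac)
  finally show ?thesis .
qed

lemma cov_up_frame:
  assumes y: "y \<in> V" and j: "j \<in> frame_idx TYPE('n)"
  shows "(\<chi> e. \<Sum>c\<in>UNIV. cov_up e c y * mf y j $ c)
           = gform (Lmat y) (nf y) (mf y j) *\<^sub>R l y + theta y *\<^sub>R mf y j"
proof -
  have yU: "y \<in> U" using V_subset[OF y] .
  let ?v = "(\<chi> e. \<Sum>c\<in>UNIV. cov_up e c y * mf y j $ c)"
  have "?v = gform (g y) (nf y) ?v *\<^sub>R l y + gform (g y) (l y) ?v *\<^sub>R nf y
       + (\<Sum>k\<in>frame_idx TYPE('n). gform (g y) (mf y k) ?v *\<^sub>R mf y k)"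
    using null_frame_expansion[OF g_sym[OF yU] _ null_frame_at[OF yU]] dim by simp
  also have "gform (g y) (l y) ?v = 0"
    using gform_cov_up_frame[OF yU] gform_Lmat_l_left[OF yU] by simp
  also have "(\<Sum>k\<in>frame_idx TYPE('n). gform (g y) (mf y k) ?v *\<^sub>R mf y k)
      = (\<Sum>k\<in>frame_idx TYPE('n). (if k = j then theta y else 0) *\<^sub>R mf y k)"
    by (rule sum.cong[OF refl])
      (simp add: gform_cov_up_frame[OF yU] Lij_eq_theta[OF y _ j, unfolded Lij_eq_gform, folded Lmat_def])
  also have "\<dots> = theta y *\<^sub>R mf y j"
    using j by (simp add: if_distrib[of "\<lambda>t. t *\<^sub>R _"] sum.delta frame_idx_def cong: if_cong)
  finally show ?thesis by (simp add: gform_cov_up_frame[OF yU])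
qed

lemma cov2_low_frame_l_frame:
  assumes y: "y \<in> V" and i: "i \<in> frame_idx TYPE('n)" and j: "j \<in> frame_idx TYPE('n)"
  shows "(\<Sum>b\<in>UNIV. \<Sum>c\<in>UNIV. (\<Sum>d\<in>UNIV. cov2_low b d c y * l y$d) * mf y i $ b * mf y j $ c)
    = (accel_factor y * theta y - theta y * theta y) * (if i = j then 1 else 0)"
proof -
  have yU: "y \<in> U" using V_subset[OF y] .
  let ?m = "mf y"
  have dfactor_term: "(\<Sum>b\<in>UNIV. \<Sum>c\<in>UNIV. pd c accel_factor y * lower g l b y * ?m i $ b * ?m j $ c) = 0"
  proof -
    have "(\<Sum>b\<in>UNIV. \<Sum>c\<in>UNIV. pd c accel_factor y * lower g l b y * ?m i $ b * ?m j $ c)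
       = (\<Sum>b\<in>UNIV. lower g l b y * ?m i $ b) * (\<Sum>c\<in>UNIV. pd c accel_factor y * ?m j $ c)"
      unfolding sum_product by (simp add: mult_ac)
    then show ?thesis using lower_frame(2)[OF yU i] by simp
  qed
  have factor_term: "(\<Sum>b\<in>UNIV. \<Sum>c\<in>UNIV. accel_factor y * cov_low g l b c y * ?m i $ b * ?m j $ c)
      = accel_factor y * (if i = j then theta y else 0)"
  proof -
    have "(\<Sum>b\<in>UNIV. \<Sum>c\<in>UNIV. accel_factor y * cov_low g l b c y * ?m i $ b * ?m j $ c)
        = accel_factor y * Lij g l ?m y i j"
      unfolding Lij_def by (simp add: sum_distrib_left mult_ac)
    then show ?thesis using Lij_eq_theta[OF y i j] by simp
  qed
  have square_term: "(\<Sum>b\<in>UNIV. \<Sum>c\<in>UNIV. (\<Sum>e\<in>UNIV. cov_low g l b e y * cov_up e c y) * ?m i $ b * ?m j $ c)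
       = theta y * (if i = j then theta y else 0)"
  proof -
    have "(\<Sum>b\<in>UNIV. \<Sum>c\<in>UNIV. (\<Sum>e\<in>UNIV. cov_low g l b e y * cov_up e c y) * ?m i $ b * ?m j $ c)
       = gform (Lmat y) (?m i) (\<chi> e. \<Sum>c\<in>UNIV. cov_up e c y * ?m j $ c)"
      unfolding gform_def Lmat_def
      by (simp add: sum_distrib_left sum_distrib_right mult_ac) (rule sum.cong[OF refl], rule sum.swap)
    also have "\<dots> = gform (Lmat y) (nf y) (?m j) * gform (Lmat y) (?m i) (l y) + theta y * gform (Lmat y) (?m i) (?m j)"
      unfolding cov_up_frame[OF y j] by (simp add: gform_add_right gform_scale_right)
    also have "\<dots> = theta y * (if i = j then theta y else 0)"
      using gform_Lmat_l_right[OF y, of "?m i"] lower_frame(2)[OF yU i] Lij_eq_theta[OF y i j]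
      by (simp add: Lij_eq_gform Lmat_def)
    finally show ?thesis .
  qed
  have "(\<Sum>b\<in>UNIV. \<Sum>c\<in>UNIV. (\<Sum>d\<in>UNIV. cov2_low b d c y * l y$d) * ?m i $ b * ?m j $ c)
     = (\<Sum>b\<in>UNIV. \<Sum>c\<in>UNIV. pd c accel_factor y * lower g l b y * ?m i $ b * ?m j $ c)
     + (\<Sum>b\<in>UNIV. \<Sum>c\<in>UNIV. accel_factor y * cov_low g l b c y * ?m i $ b * ?m j $ c)
     - (\<Sum>b\<in>UNIV. \<Sum>c\<in>UNIV. (\<Sum>e\<in>UNIV. cov_low g l b e y * cov_up e c y) * ?m i $ b * ?m j $ c)"
    unfolding cov2_low_contract_l[OF y] by (simp add: algebra_simps sum.distrib sum_subtractf)
  then show ?thesis unfolding dfactor_term factor_term square_term by simp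
qed

text \<open>\<open>\<rho>\<close> is the combination in the Raychaudhuri equation
  \<open>l\<^sup>c \<theta>\<^sub>,\<^sub>c = \<epsilon>\<theta> - \<theta>\<^sup>2 - R\<^sub>0\<^sub>0 / (n - 2)\<close> of a shearfree, twistfree congruence.\<close>

definition rho :: "real^'n \<Rightarrow> real" where
  "rho y = accel_factor y * theta y - theta y * theta y - (\<Sum>c\<in>UNIV. pd c theta y * l y$c)"

lemma riem_l_frame_l_frame:
  assumes y: "y \<in> V" and i: "i \<in> frame_idx TYPE('n)" and j: "j \<in> frame_idx TYPE('n)"
  shows "contract4 (\<lambda>a b c d. riem g a b c d y) (l y) (mf y i) (l y) (mf y j) = rho y * (if i = j then 1 else 0)"
proof -
  have yU: "y \<in> U" using V_subset[OF y] .
  let ?m = "mf y"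
  have ricci: "(\<Sum>a\<in>UNIV. l y$a * riem g a b c d y) = cov2_low b c d y - cov2_low b d c y" for b c d
    using contract_l_riem[OF yU, of b c d] ricci_identity[OF yU, of b d c] by simp
  have "contract4 (\<lambda>a b c d. riem g a b c d y) (l y) (?m i) (l y) (?m j)
     = (\<Sum>b\<in>UNIV. \<Sum>c\<in>UNIV. \<Sum>d\<in>UNIV. cov2_low b c d y * ?m i $ b * l y$c * ?m j $ d)
       - (\<Sum>b\<in>UNIV. \<Sum>c\<in>UNIV. \<Sum>d\<in>UNIV. cov2_low b d c y * ?m i $ b * l y$c * ?m j $ d)"
    unfolding contract4_first_index ricci by (simp add: algebra_simps sum_subtractf)
  also have "(\<Sum>b\<in>UNIV. \<Sum>c\<in>UNIV. \<Sum>d\<in>UNIV. cov2_low b c d y * ?m i $ b * l y$c * ?m j $ d)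
      = (\<Sum>b\<in>UNIV. \<Sum>d\<in>UNIV. (\<Sum>c\<in>UNIV. cov2_low b c d y * l y$c) * ?m i $ b * ?m j $ d)"
    by (rule sum.cong[OF refl], subst sum.swap) (simp add: sum_distrib_right sum_distrib_left mult_ac)
  also have "\<dots> = (accel_factor y * theta y - theta y * theta y) * (if i = j then 1 else 0)"
    using cov2_low_frame_l_frame[OF y i j] .
  also have "(\<Sum>b\<in>UNIV. \<Sum>c\<in>UNIV. \<Sum>d\<in>UNIV. cov2_low b d c y * ?m i $ b * l y$c * ?m j $ d)
      = (\<Sum>b\<in>UNIV. \<Sum>d\<in>UNIV. (\<Sum>c\<in>UNIV. cov2_low b d c y * l y$c) * ?m i $ b * ?m j $ d)"
    by (rule sum.cong[OF refl], subst sum.swap) (simp add: sum_distrib_right sum_distrib_left mult_ac)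
  also have "\<dots> = (\<Sum>c\<in>UNIV. pd c theta y * l y$c) * (if i = j then 1 else 0)"
    using cov2_low_along_l_frame[OF y i j] .
  finally show ?thesis unfolding rho_def by (simp add: algebra_simps)
qed

text \<open>Tracing gives \<open>R\<^sub>0\<^sub>0 = (n - 2) \<rho>\<close>, which is exactly the trace part subtracted in \<open>C\<^sub>0\<^sub>i\<^sub>0\<^sub>j\<close>.\<close>

lemma C0i0j_vanishes:
  assumes y: "y \<in> V" and i: "i \<in> frame_idx TYPE('n)" and j: "j \<in> frame_idx TYPE('n)"
  shows "C0i0j g l (mf y) y i j = 0"
proof -
  have yU: "y \<in> U" using V_subset[OF y] .
  have "ricci_ll y = (\<Sum>k\<in>frame_idx TYPE('n). rho y)"
    unfolding ricci_ll_frame_trace[OF yU] by (rule sum.cong[OF refl]) (simp add: riem_l_frame_l_frame[OF y])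
  also have "\<dots> = (real CARD('n) - 2) * rho y"
    using dim by (simp add: frame_idx_def of_nat_diff)
  finally have "ricci_ll y = (real CARD('n) - 2) * rho y" .
  moreover have "real CARD('n) - 2 \<noteq> 0" using dim by simp
  ultimately show ?thesis unfolding C0i0j_eq_riem[OF yU i j] riem_l_frame_l_frame[OF y i j] by simp
qed

end

theorem geodetic_shearfree_twistfree_imp_wand:
  fixes g :: "real^'n::finite \<Rightarrow> real^'n^'n"
    and l nf :: "real^'n \<Rightarrow> real^'n"
    and mf :: "real^'n \<Rightarrow> nat \<Rightarrow> real^'n"
  assumes "CARD('n) > 2" "open U" "lorentzian_metric U g" "smooth_vf U l"
    and "\<forall>x\<in>U. null_frame (g x) (l x) (nf x) (mf x)"
    and "geodetic g U l"
    and "\<forall>x\<in>U. \<forall>i\<in>frame_idx TYPE('n). \<forall>j\<in>frame_idx TYPE('n). shear g l (mf x) x i j = 0"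
    and "\<forall>x\<in>U. \<forall>i\<in>frame_idx TYPE('n). \<forall>j\<in>frame_idx TYPE('n). twist g l (mf x) x i j = 0"
  shows "wand g U l mf"
  unfolding wand_def
proof (intro ballI)
  fix x i j assume x: "x \<in> U" and i: "i \<in> frame_idx TYPE('n)" and j: "j \<in> frame_idx TYPE('n)"
  interpret null_congruence U g l nf mf
    using assms by unfold_locales auto
  obtain a0 where a0: "lower g l a0 x \<noteq> 0"
    using lower_nonzero[OF x] by blast
  interpret shearfree_twistfree_geodetic U g l nf mf a0
    using assms by unfold_locales auto
  have "x \<in> V" using x a0 by (simp add: V_def)
  then show "C0i0j g l (mf x) x i j = 0" using i j by (rule C0i0j_vanishes)
qed

theorem proposition4:
  fixes g :: "real^'n::finite \<Rightarrow> real^'n^'n"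
    and l nf :: "real^'n \<Rightarrow> real^'n"
    and mf :: "real^'n \<Rightarrow> nat \<Rightarrow> real^'n"
    and U :: "(real^'n) set"
  assumes dim: "CARD('n) > 4"
    and U_open: "open U"
    and metric: "lorentzian_metric U g"
    and l_smooth: "smooth_vf U l"
    and frame: "\<forall>x\<in>U. null_frame (g x) (l x) (nf x) (mf x)"
    and geod: "geodetic g U l"
    and not_wand: "\<not> wand g U l mf"
    and shearfree: "\<forall>x\<in>U. \<forall>i\<in>frame_idx TYPE('n). \<forall>j\<in>frame_idx TYPE('n). shear g l (mf x) x i j = 0"
  shows "\<exists>x\<in>U. \<exists>i\<in>frame_idx TYPE('n). \<exists>j\<in>frame_idx TYPE('n). twist g l (mf x) x i j \<noteq> 0"
proof (rule ccontr)
  assume "\<not> ?thesis"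
  then have "\<forall>x\<in>U. \<forall>i\<in>frame_idx TYPE('n). \<forall>j\<in>frame_idx TYPE('n). twist g l (mf x) x i j = 0"
    by blast
  moreover have "CARD('n) > 2" using dim by simp
  ultimately have "wand g U l mf"
    using geodetic_shearfree_twistfree_imp_wand U_open metric l_smooth frame geod shearfree by blast
  with not_wand show False ..
qed

end
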